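(* Let $\mathbf H$ be an $N_r\times N_t$ matrix with i.i.d. $\mathcal{CN}(0,1)$ entries. The wideband slope of the MMSE achievable sum rate is $$S_0^{\rm mmse}=\frac{2N_rN_t}{2N_t+N_r-1}.$$
   Context: $I^{\rm mmse}(\mathrm{snr})=\sum_{i=1}^{N_t}E[\log_2(1+\gamma_i)]$ with $\gamma_i=1/\big[(\mathbf I_{N_t}+\frac{\mathrm{snr}}{N_t}\mathbf H^\dagger\mathbf H)^{-1}\big]_{i,i}-1$. The wideband slope of a rate function $I(\mathrm{snr})$ is $S_0=-2(\dot I(0))^2\ln2/\ddot I(0)$, with derivatives with respect to $\mathrm{snr}$ at $0$. *)

theory Defs
  imports "HOL-Probability.Probability"
begin

text \<open>Circularly-symmetric standard complex Gaussian CN(0,1): density (1/pi) exp(-|z|^2)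
  with respect to Lebesgue measure on the complex plane (real and imaginary parts
  independent N(0,1/2), so E|z|^2 = 1).\<close>
definition CN01 :: "complex measure" where
  "CN01 = density lborel (\<lambda>z. ennreal (exp (- (cmod z)\<^sup>2) / pi))"

text \<open>Distribution of an Nr x Nt channel matrix with i.i.d. CN(0,1) entries; the
  matrix is indexed by the finite types 'r (rows, Nr = CARD('r)) and 't (columns,
  Nt = CARD('t)).\<close>
definition channel_dist :: "('r::finite \<times> 't::finite \<Rightarrow> complex) measure" where
  "channel_dist = PiM UNIV (\<lambda>_. CN01)"

definition to_matrix :: "('r::finite \<times> 't::finite \<Rightarrow> complex) \<Rightarrow> complex^'t^'r" where
  "to_matrix f = (\<chi> i j. f (i, j))"

definition adjoint_mat :: "complex^'t^'r \<Rightarrow> complex^'r^'t" where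
  "adjoint_mat H = (\<chi> j i. cnj (H $ i $ j))"

text \<open>Per-stream post-MMSE SINR gamma_i = 1/[(I + snr/Nt H^dagger H)^{-1}]_{ii} - 1
  (the diagonal entry is real for this Hermitian positive definite matrix; we take Re).\<close>
definition mmse_sinr :: "real \<Rightarrow> complex^'t::finite^'r::finite \<Rightarrow> 't \<Rightarrow> real" where
  "mmse_sinr snr H i =
     1 / Re (matrix_inv (mat 1 + (snr / real CARD('t)) *\<^sub>R (adjoint_mat H ** H)) $ i $ i) - 1"

definition I_mmse :: "('r::finite \<times> 't::finite) itself \<Rightarrow> real \<Rightarrow> real" where
  "I_mmse _ snr = (\<Sum>i\<in>(UNIV::'t set).
      integral\<^sup>L (channel_dist :: ('r \<times> 't \<Rightarrow> complex) measure)
        (\<lambda>f. log 2 (1 + mmse_sinr snr (to_matrix f :: complex^'t^'r) i)))"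

end

(* With A = H^dagger H / Nt positive semidefinite and R(s) = (I + s A)^-1, the SINR of stream i is
   1 / R(s)_ii - 1, so its rate is - log2 R(s)_ii. Since R' = - R A R, the first two derivatives at
   s = 0 are A_ii / ln 2 and (A_ii^2 - 2 (A^2)_ii) / ln 2. The Gaussian moments E|h|^2 = 1 and
   E|h|^4 = 2 give E A_ii = Nr / Nt, E A_ii^2 = Nr (Nr + 1) / Nt^2 and E (A^2)_ii = Nr (Nr + Nt) / Nt^2,
   hence I'(0) = Nr / ln 2 and I''(0) = - Nr (Nr + 2 Nt - 1) / (Nt ln 2).
   Differentiation under the expectation is justified by dominated convergence: every entry of R(s) has
   modulus at most 1, and 1 / R(s)_ii is bounded by a polynomial in the entries of H, which has moments
   of all orders. *)

theory Submission
  imports Defs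
begin

section \<open>Moments of the complex Gaussian\<close>

definition re_im_density :: "real \<Rightarrow> real" where
  "re_im_density t = normal_density 0 (1 / sqrt 2) t"

lemma re_im_density_eq: "re_im_density t = exp (- t\<^sup>2) / sqrt pi"
  by (simp add: re_im_density_def normal_density_def power_divide real_sqrt_divide)

lemma re_im_density_nonneg: "0 \<le> re_im_density t"
  by (simp add: re_im_density_def)

lemma borel_measurable_re_im_density[measurable]: "re_im_density \<in> borel_measurable borel"
  unfolding re_im_density_def[abs_def] by measurable

lemma integrable_re_im_density_moment: "integrable lborel (\<lambda>t. re_im_density t * t ^ k)"
  using integrable_normal_moment[of "1 / sqrt 2" 0 k] by (simp add: re_im_density_def)

lemma integrable_re_im_density: "integrable lborel re_im_density"
  using integrable_re_im_density_moment[of 0] by simp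

lemma re_im_density_moments:
  "integral\<^sup>L lborel re_im_density = 1"
  "integral\<^sup>L lborel (\<lambda>t. re_im_density t * t) = 0"
  "integral\<^sup>L lborel (\<lambda>t. re_im_density t * t\<^sup>2) = 1 / 2"
  "integral\<^sup>L lborel (\<lambda>t. re_im_density t * t ^ 4) = 3 / 4"
  using integral_normal_moment_even[of "1 / sqrt 2" 0 0] integral_normal_moment_odd[of "1 / sqrt 2" 0 0]
    integral_normal_moment_even[of "1 / sqrt 2" 0 1] integral_normal_moment_even[of "1 / sqrt 2" 0 2]
  by (simp_all add: re_im_density_def[abs_def] power_divide fact_numeral)

lemma integrable_re_im_density_poly: "integrable lborel (\<lambda>t. re_im_density t * (1 + t\<^sup>2) ^ n)"
proof -
  have "re_im_density t * (1 + t\<^sup>2) ^ n = (\<Sum>k\<le>n. real (n choose k) * (re_im_density t * t ^ (2 * k)))"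
    for t :: real
  proof -
    have "(1 + t\<^sup>2) ^ n = (\<Sum>k\<le>n. real (n choose k) * (t\<^sup>2) ^ k)"
      using binomial_ring[of "t\<^sup>2" 1 n] by (simp add: add.commute)
    then show ?thesis
      by (simp add: sum_distrib_left mult.left_commute flip: power_mult)
  qed
  then show ?thesis
    using integrable_re_im_density_moment by (auto intro!: integrable_sum integrable_mult_right)
qed

abbreviation coord_lborel :: "(complex \<Rightarrow> real) measure" where
  "coord_lborel \<equiv> PiM (Basis::complex set) (\<lambda>_. lborel)"

lemma measurable_Complex_coord[measurable]:
  "(\<lambda>f. Complex (f 1) (f \<i>)) \<in> measurable coord_lborel borel"
proof -
  have "(\<lambda>f. Complex (f 1) (f \<i>)) = (\<lambda>f. complex_of_real (f 1) + \<i> * complex_of_real (f \<i>))"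
    by (auto simp: complex_eq_iff)
  moreover have "(\<lambda>f. complex_of_real (f 1) + \<i> * complex_of_real (f \<i>)) \<in> measurable coord_lborel borel"
    by (simp add: Basis_complex_def)
  ultimately show ?thesis by simp
qed

lemma lborel_complex_eq_distr:
  "(lborel::complex measure) = distr coord_lborel borel (\<lambda>f. Complex (f 1) (f \<i>))"
proof -
  have "(\<Sum>b\<in>(Basis::complex set). f b *\<^sub>R b) = Complex (f 1) (f \<i>)" for f :: "complex \<Rightarrow> real"
    by (simp add: Basis_complex_def complex_eq_iff)
  then show ?thesis by (subst lborel_eq) simp
qed

lemma CN01_density_Complex: "exp (- (cmod (Complex a b))\<^sup>2) / pi = re_im_density a * re_im_density b"
proof -
  have "exp (- (cmod (Complex a b))\<^sup>2) = exp (- a\<^sup>2) * exp (- b\<^sup>2)"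
    by (simp add: cmod_def exp_add[symmetric])
  moreover have "sqrt pi * sqrt pi = pi" by simp
  ultimately show ?thesis by (simp add: re_im_density_eq)
qed

lemma integral_CN01_eq_coord:
  fixes g :: "complex \<Rightarrow> 'b::{banach,second_countable_topology}"
  assumes [measurable]: "g \<in> borel_measurable borel"
  shows "integral\<^sup>L CN01 g = integral\<^sup>L coord_lborel
           (\<lambda>f. (re_im_density (f 1) * re_im_density (f \<i>)) *\<^sub>R g (Complex (f 1) (f \<i>)))"
proof -
  have "integral\<^sup>L CN01 g = integral\<^sup>L lborel (\<lambda>z. (exp (- (cmod z)\<^sup>2) / pi) *\<^sub>R g z)"
    unfolding CN01_def by (rule integral_density) auto
  also have "\<dots> = integral\<^sup>L coord_lborel
      (\<lambda>f. (exp (- (cmod (Complex (f 1) (f \<i>)))\<^sup>2) / pi) *\<^sub>R g (Complex (f 1) (f \<i>)))"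
    by (subst lborel_complex_eq_distr, subst integral_distr) auto
  finally show ?thesis by (simp add: CN01_density_Complex)
qed

lemma integrable_CN01_iff_coord:
  fixes g :: "complex \<Rightarrow> 'b::{banach,second_countable_topology}"
  assumes [measurable]: "g \<in> borel_measurable borel"
  shows "integrable CN01 g \<longleftrightarrow> integrable coord_lborel
           (\<lambda>f. (re_im_density (f 1) * re_im_density (f \<i>)) *\<^sub>R g (Complex (f 1) (f \<i>)))"
proof -
  have "integrable CN01 g \<longleftrightarrow> integrable lborel (\<lambda>z. (exp (- (cmod z)\<^sup>2) / pi) *\<^sub>R g z)"
    unfolding CN01_def by (rule integrable_density) auto
  also have "\<dots> \<longleftrightarrow> integrable coord_lborel
      (\<lambda>f. (exp (- (cmod (Complex (f 1) (f \<i>)))\<^sup>2) / pi) *\<^sub>R g (Complex (f 1) (f \<i>)))"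
    by (subst lborel_complex_eq_distr, subst integrable_distr_eq) auto
  finally show ?thesis by (simp add: CN01_density_Complex)
qed

interpretation coord: product_sigma_finite "\<lambda>_::complex. lborel::real measure"
  by standard

lemma integral_coord_lborel_prod:
  fixes u v :: "real \<Rightarrow> real"
  assumes "integrable lborel u" "integrable lborel v"
  shows "integrable coord_lborel (\<lambda>f. u (f 1) * v (f \<i>))"
    and "integral\<^sup>L coord_lborel (\<lambda>f. u (f 1) * v (f \<i>)) = integral\<^sup>L lborel u * integral\<^sup>L lborel v"
proof -
  have prod_Basis: "(\<Prod>b\<in>Basis. (if b = 1 then u else v) (f b)) = u (f 1) * v (f \<i>)" for f
    by (simp add: Basis_complex_def)
  have int: "\<And>b. b \<in> Basis \<Longrightarrow> integrable lborel (if b = 1 then u else v)"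
    using assms by auto
  show "integrable coord_lborel (\<lambda>f. u (f 1) * v (f \<i>))"
    using coord.product_integrable_prod[of Basis "\<lambda>b. if b = 1 then u else v", OF _ int] by (simp add: prod_Basis)
  show "integral\<^sup>L coord_lborel (\<lambda>f. u (f 1) * v (f \<i>)) = integral\<^sup>L lborel u * integral\<^sup>L lborel v"
    using coord.product_integral_prod[of Basis "\<lambda>b. if b = 1 then u else v", OF _ int] by (simp add: prod_Basis) (simp add: Basis_complex_def)
qed

lemma integral_CN01_Re_Im:
  fixes u v :: "real \<Rightarrow> real"
  assumes [measurable]: "u \<in> borel_measurable borel" "v \<in> borel_measurable borel"
    and u: "integrable lborel (\<lambda>t. re_im_density t * u t)"
    and v: "integrable lborel (\<lambda>t. re_im_density t * v t)"
  shows "integrable CN01 (\<lambda>z. u (Re z) * v (Im z))"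
    and "integral\<^sup>L CN01 (\<lambda>z. u (Re z) * v (Im z)) =
           integral\<^sup>L lborel (\<lambda>t. re_im_density t * u t) * integral\<^sup>L lborel (\<lambda>t. re_im_density t * v t)"
proof -
  note prod = integral_coord_lborel_prod[OF u v]
  show "integrable CN01 (\<lambda>z. u (Re z) * v (Im z))"
    using prod(1) by (subst integrable_CN01_iff_coord) (simp_all add: mult_ac)
  show "integral\<^sup>L CN01 (\<lambda>z. u (Re z) * v (Im z)) =
      integral\<^sup>L lborel (\<lambda>t. re_im_density t * u t) * integral\<^sup>L lborel (\<lambda>t. re_im_density t * v t)"
    using prod(2) by (subst integral_CN01_eq_coord) (simp_all add: mult_ac)
qed

lemma prob_space_CN01: "prob_space CN01"
proof
  have int: "integrable lborel (\<lambda>z::complex. exp (- (cmod z)\<^sup>2) / pi)"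
    by (subst lborel_complex_eq_distr, subst integrable_distr_eq)
       (auto simp: CN01_density_Complex intro!: integral_coord_lborel_prod(1) integrable_re_im_density)
  have "emeasure CN01 (space CN01) = (\<integral>\<^sup>+ z. ennreal (exp (- (cmod z)\<^sup>2) / pi) \<partial>lborel)"
    unfolding CN01_def by (simp add: emeasure_density)
  also have "\<dots> = ennreal (integral\<^sup>L lborel (\<lambda>z::complex. exp (- (cmod z)\<^sup>2) / pi))"
    by (rule nn_integral_eq_integral) (auto simp: int)
  also have "integral\<^sup>L lborel (\<lambda>z::complex. exp (- (cmod z)\<^sup>2) / pi) = 1"
    by (subst lborel_complex_eq_distr, subst integral_distr)
       (auto simp: CN01_density_Complex integral_coord_lborel_prod(2) integrable_re_im_density re_im_density_moments)
  finally show "emeasure CN01 (space CN01) = 1" by simp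
qed

interpretation CN01: prob_space CN01
  by (rule prob_space_CN01)

lemma sets_CN01[measurable_cong]: "sets CN01 = sets borel"
  by (simp add: CN01_def)

lemma integrable_CN01_poly: "integrable CN01 (\<lambda>z. (1 + (cmod z)\<^sup>2) ^ n)"
proof (subst integrable_CN01_iff_coord)
  show "(\<lambda>z. (1 + (cmod z)\<^sup>2) ^ n) \<in> borel_measurable borel" by measurable
  let ?F = "\<lambda>f::complex \<Rightarrow> real. (re_im_density (f 1) * (1 + (f 1)\<^sup>2) ^ n) * (re_im_density (f \<i>) * (1 + (f \<i>)\<^sup>2) ^ n)"
  have bound: "norm ((re_im_density a * re_im_density b) *\<^sub>R (1 + (cmod (Complex a b))\<^sup>2) ^ n)
      \<le> norm ((re_im_density a * (1 + a\<^sup>2) ^ n) * (re_im_density b * (1 + b\<^sup>2) ^ n))" for a b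
  proof -
    have "(1 + a\<^sup>2 + b\<^sup>2) ^ n \<le> ((1 + a\<^sup>2) * (1 + b\<^sup>2)) ^ n"
      by (rule power_mono) (simp_all add: algebra_simps add_nonneg_nonneg)
    then have "re_im_density a * re_im_density b * (1 + a\<^sup>2 + b\<^sup>2) ^ n
        \<le> re_im_density a * re_im_density b * ((1 + a\<^sup>2) * (1 + b\<^sup>2)) ^ n"
      by (rule mult_left_mono) (simp add: re_im_density_nonneg)
    then show ?thesis
      by (simp add: cmod_def re_im_density_nonneg power_mult_distrib abs_mult mult_ac add.assoc)
  qed
  show "integrable coord_lborel
      (\<lambda>f. (re_im_density (f 1) * re_im_density (f \<i>)) *\<^sub>R (1 + (cmod (Complex (f 1) (f \<i>)))\<^sup>2) ^ n)"
    by (rule Bochner_Integration.integrable_bound[OF integral_coord_lborel_prod(1)[OF integrable_re_im_density_poly integrable_re_im_density_poly]])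
       (use bound in auto)
qed

lemma integrable_CN01_poly_bounded:
  fixes g :: "complex \<Rightarrow> 'b::{banach,second_countable_topology}"
  assumes [measurable]: "g \<in> borel_measurable borel"
    and bound: "\<And>z. norm (g z) \<le> C * (1 + (cmod z)\<^sup>2) ^ n"
  shows "integrable CN01 g"
proof (rule Bochner_Integration.integrable_bound[where f="\<lambda>z. C * (1 + (cmod z)\<^sup>2) ^ n"])
  show "integrable CN01 (\<lambda>z. C * (1 + (cmod z)\<^sup>2) ^ n)"
    using integrable_CN01_poly by simp
  show "AE z in CN01. norm (g z) \<le> norm (C * (1 + (cmod z)\<^sup>2) ^ n)"
    by (auto intro!: AE_I2 order_trans[OF bound])
qed (simp add: CN01_def)

lemma le_one_plus_square: "x \<le> 1 + (x::real)\<^sup>2"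
  using zero_le_power2[of "x - 1 / 2"] by (simp add: power2_diff field_simps)

lemma integrable_CN01_id: "integrable CN01 (\<lambda>z. z)"
  by (rule integrable_CN01_poly_bounded[where C=1 and n=1]) (auto intro: le_one_plus_square)

lemma integrable_CN01_norm_sq: "integrable CN01 (\<lambda>z. (cmod z)\<^sup>2)"
  by (rule integrable_CN01_poly_bounded[where C=1 and n=1]) auto

lemma integrable_CN01_norm_pow4: "integrable CN01 (\<lambda>z. (cmod z) ^ 4)"
proof (rule integrable_CN01_poly_bounded[where C=1 and n=2])
  show "norm ((cmod z) ^ 4) \<le> 1 * (1 + (cmod z)\<^sup>2) ^ 2" for z
    using power_mono[of "(cmod z)\<^sup>2" "1 + (cmod z)\<^sup>2" 2] by (simp flip: power_mult)
qed simp

lemma integral_CN01_Re_Im_power: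
  "integrable CN01 (\<lambda>z. Re z ^ j * Im z ^ k)"
  "integral\<^sup>L CN01 (\<lambda>z. Re z ^ j * Im z ^ k) =
     integral\<^sup>L lborel (\<lambda>t. re_im_density t * t ^ j) * integral\<^sup>L lborel (\<lambda>t. re_im_density t * t ^ k)"
  using integral_CN01_Re_Im[of "\<lambda>t. t ^ j" "\<lambda>t. t ^ k"] integrable_re_im_density_moment by simp_all

lemma CN01_mean: "integral\<^sup>L CN01 (\<lambda>z. z) = 0"
proof (rule complex_eqI)
  show "Re (integral\<^sup>L CN01 (\<lambda>z. z)) = Re 0" "Im (integral\<^sup>L CN01 (\<lambda>z. z)) = Im 0"
    using integral_CN01_Re_Im_power(2)[of 1 0] integral_CN01_Re_Im_power(2)[of 0 1]
    by (simp_all add: integral_Re[OF integrable_CN01_id, symmetric] integral_Im[OF integrable_CN01_id, symmetric]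
        re_im_density_moments)
qed

lemma CN01_moment2: "integral\<^sup>L CN01 (\<lambda>z. (cmod z)\<^sup>2) = 1"
proof -
  have i: "integrable CN01 (\<lambda>z. (Re z)\<^sup>2)" "integrable CN01 (\<lambda>z. (Im z)\<^sup>2)"
    using integral_CN01_Re_Im_power(1)[of 2 0] integral_CN01_Re_Im_power(1)[of 0 2] by simp_all
  have v: "integral\<^sup>L CN01 (\<lambda>z. (Re z)\<^sup>2) = 1 / 2" "integral\<^sup>L CN01 (\<lambda>z. (Im z)\<^sup>2) = 1 / 2"
    using integral_CN01_Re_Im_power(2)[of 2 0] integral_CN01_Re_Im_power(2)[of 0 2]
    by (simp_all add: re_im_density_moments)
  show ?thesis by (simp add: cmod_power2 i v)
qed

lemma CN01_moment4: "integral\<^sup>L CN01 (\<lambda>z. (cmod z) ^ 4) = 2"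
proof -
  have i: "integrable CN01 (\<lambda>z. (Re z) ^ 4)" "integrable CN01 (\<lambda>z. (Im z) ^ 4)"
    "integrable CN01 (\<lambda>z. (Re z)\<^sup>2 * (Im z)\<^sup>2)"
    using integral_CN01_Re_Im_power(1)[of 4 0] integral_CN01_Re_Im_power(1)[of 0 4]
      integral_CN01_Re_Im_power(1)[of 2 2] by simp_all
  have v: "integral\<^sup>L CN01 (\<lambda>z. (Re z) ^ 4) = 3 / 4" "integral\<^sup>L CN01 (\<lambda>z. (Im z) ^ 4) = 3 / 4"
    "integral\<^sup>L CN01 (\<lambda>z. (Re z)\<^sup>2 * (Im z)\<^sup>2) = 1 / 4"
    using integral_CN01_Re_Im_power(2)[of 4 0] integral_CN01_Re_Im_power(2)[of 0 4]
      integral_CN01_Re_Im_power(2)[of 2 2]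
    by (simp_all add: re_im_density_moments)
  have "(cmod z) ^ 4 = (Re z) ^ 4 + (Im z) ^ 4 + 2 * ((Re z)\<^sup>2 * (Im z)\<^sup>2)" for z
  proof -
    have "(cmod z) ^ 4 = (cmod z)\<^sup>2 * (cmod z)\<^sup>2"
      by (simp add: power4_eq_xxxx power2_eq_square)
    also have "\<dots> = ((Re z)\<^sup>2 + (Im z)\<^sup>2) * ((Re z)\<^sup>2 + (Im z)\<^sup>2)"
      by (simp only: cmod_power2)
    finally show ?thesis
      by (simp add: algebra_simps power2_eq_square power4_eq_xxxx)
  qed
  then show ?thesis by (simp add: i v)
qed

section \<open>Moments of the Gram matrix of the channel\<close>

interpretation channel: product_sigma_finite "\<lambda>_::'i. CN01"
  by standard

lemma integral_channel_dist_prod: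
  fixes F :: "'r::finite \<times> 't::finite \<Rightarrow> complex \<Rightarrow> 'c::{real_normed_field,banach,second_countable_topology}"
  assumes "\<And>e. e \<in> S \<Longrightarrow> integrable CN01 (F e)"
  shows "integrable channel_dist (\<lambda>x. \<Prod>e\<in>S. F e (x e))"
    and "integral\<^sup>L channel_dist (\<lambda>x. \<Prod>e\<in>S. F e (x e)) = (\<Prod>e\<in>S. integral\<^sup>L CN01 (F e))"
proof -
  define G where "G e = (if e \<in> S then F e else (\<lambda>_. 1))" for e
  have int: "\<And>e. e \<in> UNIV \<Longrightarrow> integrable CN01 (G e)"
    using assms by (auto simp: G_def)
  have prod_G: "(\<Prod>e\<in>UNIV. G e (x e)) = (\<Prod>e\<in>S. F e (x e))" for x
    by (simp add: G_def prod.If_cases if_distrib[of "\<lambda>f. f (x _)"])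
  have prod_integral_G: "(\<Prod>e\<in>UNIV. integral\<^sup>L CN01 (G e)) = (\<Prod>e\<in>S. integral\<^sup>L CN01 (F e))"
    by (simp add: G_def prod.If_cases if_distrib[of "integral\<^sup>L CN01"] CN01.prob_space)
  show "integrable channel_dist (\<lambda>x. \<Prod>e\<in>S. F e (x e))"
    using channel.product_integrable_prod[of UNIV G, OF _ int] by (simp add: prod_G channel_dist_def)
  show "integral\<^sup>L channel_dist (\<lambda>x. \<Prod>e\<in>S. F e (x e)) = (\<Prod>e\<in>S. integral\<^sup>L CN01 (F e))"
    using channel.product_integral_prod[of UNIV G, OF _ int]
    by (simp add: prod_G prod_integral_G channel_dist_def)
qed

lemma integral_channel_dist_entry:
  fixes g :: "complex \<Rightarrow> 'c::{real_normed_field,banach,second_countable_topology}"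
  assumes "integrable CN01 g"
  shows "integrable channel_dist (\<lambda>x::'r::finite \<times> 't::finite \<Rightarrow> complex. g (x e))"
    and "integral\<^sup>L channel_dist (\<lambda>x::'r::finite \<times> 't::finite \<Rightarrow> complex. g (x e)) = integral\<^sup>L CN01 g"
  using integral_channel_dist_prod[of "{e}" "\<lambda>_. g"] assms by auto

lemma integral_channel_dist_two_entries:
  fixes g h :: "complex \<Rightarrow> 'c::{real_normed_field,banach,second_countable_topology}"
  assumes "integrable CN01 g" "integrable CN01 h" "e \<noteq> e'"
  shows "integrable channel_dist (\<lambda>x::'r::finite \<times> 't::finite \<Rightarrow> complex. g (x e) * h (x e'))"
    and "integral\<^sup>L channel_dist (\<lambda>x::'r::finite \<times> 't::finite \<Rightarrow> complex. g (x e) * h (x e'))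
           = integral\<^sup>L CN01 g * integral\<^sup>L CN01 h"
  using integral_channel_dist_prod[of "{e, e'}" "\<lambda>d. if d = e then g else h"] assms by auto

lemma one_plus_sum_le_prod:
  fixes a :: "'a \<Rightarrow> real"
  assumes "finite S" "\<And>e. e \<in> S \<Longrightarrow> 0 \<le> a e"
  shows "1 + (\<Sum>e\<in>S. a e) \<le> (\<Prod>e\<in>S. 1 + a e)"
  using assms
proof (induction S rule: finite_induct)
  case (insert x F)
  then have "0 \<le> a x" "0 \<le> (\<Sum>e\<in>F. a e)"
    by (auto intro: sum_nonneg)
  then have "1 + (\<Sum>e\<in>insert x F. a e) \<le> (1 + a x) * (1 + (\<Sum>e\<in>F. a e))"
    using insert by (simp add: algebra_simps)
  also have "\<dots> \<le> (1 + a x) * (\<Prod>e\<in>F. 1 + a e)"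
    using insert \<open>0 \<le> a x\<close> by (intro mult_left_mono) auto
  finally show ?case
    using insert by simp
qed simp

definition energy :: "('r::finite \<times> 't::finite \<Rightarrow> complex) \<Rightarrow> real" where
  "energy x = 1 + (\<Sum>e\<in>UNIV. (cmod (x e))\<^sup>2)"

lemma energy_ge_1: "1 \<le> energy x"
  by (simp add: energy_def sum_nonneg)

lemma integrable_energy_power: "integrable channel_dist (\<lambda>x. energy x ^ n)"
proof (rule Bochner_Integration.integrable_bound)
  show "integrable channel_dist (\<lambda>x. \<Prod>e\<in>UNIV. (1 + (cmod (x e))\<^sup>2) ^ n)"
    by (rule integral_channel_dist_prod(1)) (rule integrable_CN01_poly)
  show "(\<lambda>x. energy x ^ n) \<in> borel_measurable channel_dist"
    unfolding energy_def[abs_def] channel_dist_def by measurable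
  show "AE x in channel_dist. norm (energy x ^ n) \<le> norm (\<Prod>e\<in>UNIV. (1 + (cmod (x e))\<^sup>2) ^ n)"
  proof (intro AE_I2)
    fix x
    have "energy x ^ n \<le> (\<Prod>e\<in>UNIV. 1 + (cmod (x e))\<^sup>2) ^ n"
      unfolding energy_def by (intro power_mono one_plus_sum_le_prod) (auto intro!: add_nonneg_nonneg sum_nonneg)
    then show "norm (energy x ^ n) \<le> norm (\<Prod>e\<in>UNIV. (1 + (cmod (x e))\<^sup>2) ^ n)"
      using energy_ge_1[of x] by (simp add: prod_nonneg prod_power_distrib add_nonneg_nonneg sum_nonneg)
  qed
qed

definition gram :: "('r::finite \<times> 't::finite \<Rightarrow> complex) \<Rightarrow> 't \<Rightarrow> 't \<Rightarrow> complex" where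
  "gram x j k = (\<Sum>r\<in>UNIV. cnj (x (r, j)) * x (r, k))"

lemma cnj_mult_self: "cnj z * z = complex_of_real ((cmod z)\<^sup>2)"
  using complex_norm_square[of z] by (simp add: mult.commute)

lemma Re_gram_diag: "Re (gram x i i) = (\<Sum>r\<in>UNIV. (cmod (x (r, i)))\<^sup>2)"
  by (simp add: gram_def cnj_mult_self)

lemma norm_gram_diag_sq: "(cmod (gram x i i))\<^sup>2 = (Re (gram x i i))\<^sup>2"
proof -
  have "gram x i i = complex_of_real (Re (gram x i i))"
    by (simp add: Re_gram_diag gram_def cnj_mult_self)
  then show ?thesis
    by (metis norm_of_real power2_abs)
qed

lemma gram_swap: "gram x k i = cnj (gram x i k)"
  by (simp add: gram_def mult.commute)

lemma integral_gram_diag: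
  "integrable channel_dist (\<lambda>x::'r::finite \<times> 't::finite \<Rightarrow> complex. Re (gram x i i))"
  "integral\<^sup>L channel_dist (\<lambda>x::'r::finite \<times> 't::finite \<Rightarrow> complex. Re (gram x i i)) = real CARD('r)"
proof -
  note entry = integral_channel_dist_entry[OF integrable_CN01_norm_sq]
  show "integrable channel_dist (\<lambda>x::'r \<times> 't \<Rightarrow> complex. Re (gram x i i))"
    unfolding Re_gram_diag by (intro Bochner_Integration.integrable_sum entry(1))
  show "integral\<^sup>L channel_dist (\<lambda>x::'r \<times> 't \<Rightarrow> complex. Re (gram x i i)) = real CARD('r)"
    unfolding Re_gram_diag by (simp add: Bochner_Integration.integral_sum[OF entry(1)] entry(2) CN01_moment2)
qed

lemma integral_norm_sq_entries_prod:
  fixes e e' :: "'r::finite \<times> 't::finite"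
  shows "integrable channel_dist (\<lambda>x::'r \<times> 't \<Rightarrow> complex. (cmod (x e))\<^sup>2 * (cmod (x e'))\<^sup>2)"
    and "integral\<^sup>L channel_dist (\<lambda>x::'r \<times> 't \<Rightarrow> complex. (cmod (x e))\<^sup>2 * (cmod (x e'))\<^sup>2)
           = (if e = e' then 2 else 1)"
proof -
  have "integrable channel_dist (\<lambda>x::'r \<times> 't \<Rightarrow> complex. (cmod (x e))\<^sup>2 * (cmod (x e'))\<^sup>2) \<and>
    integral\<^sup>L channel_dist (\<lambda>x::'r \<times> 't \<Rightarrow> complex. (cmod (x e))\<^sup>2 * (cmod (x e'))\<^sup>2) = (if e = e' then 2 else 1)"
  proof (cases "e = e'")
    case True
    have "(cmod z)\<^sup>2 * (cmod z)\<^sup>2 = (cmod z) ^ 4" for z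
      by (simp add: power2_eq_square power4_eq_xxxx)
    then show ?thesis
      using integral_channel_dist_entry[OF integrable_CN01_norm_pow4, of e] True by (simp add: CN01_moment4)
  next
    case False
    then show ?thesis
      using integral_channel_dist_two_entries[OF integrable_CN01_norm_sq integrable_CN01_norm_sq False]
      by (simp add: CN01_moment2)
  qed
  then show "integrable channel_dist (\<lambda>x::'r \<times> 't \<Rightarrow> complex. (cmod (x e))\<^sup>2 * (cmod (x e'))\<^sup>2)"
    and "integral\<^sup>L channel_dist (\<lambda>x::'r \<times> 't \<Rightarrow> complex. (cmod (x e))\<^sup>2 * (cmod (x e'))\<^sup>2)
           = (if e = e' then 2 else 1)"
    by auto
qed

lemma gram_diag_sq_eq_sum:
  "(Re (gram x i i))\<^sup>2 = (\<Sum>r\<in>UNIV. \<Sum>r'\<in>UNIV. (cmod (x (r, i)))\<^sup>2 * (cmod (x (r', i)))\<^sup>2)"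
  unfolding Re_gram_diag power2_eq_square[of "sum _ _"] sum_product ..

lemma integral_gram_diag_sq:
  "integrable channel_dist (\<lambda>x::'r::finite \<times> 't::finite \<Rightarrow> complex. (Re (gram x i i))\<^sup>2)"
  "integral\<^sup>L channel_dist (\<lambda>x::'r::finite \<times> 't::finite \<Rightarrow> complex. (Re (gram x i i))\<^sup>2)
     = real CARD('r) * real CARD('r) + real CARD('r)"
proof -
  show "integrable channel_dist (\<lambda>x::'r \<times> 't \<Rightarrow> complex. (Re (gram x i i))\<^sup>2)"
    unfolding gram_diag_sq_eq_sum by (intro Bochner_Integration.integrable_sum integral_norm_sq_entries_prod(1))
  have "integral\<^sup>L channel_dist (\<lambda>x::'r \<times> 't \<Rightarrow> complex. (Re (gram x i i))\<^sup>2)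
      = (\<Sum>r\<in>(UNIV::'r set). \<Sum>r'\<in>UNIV. if r = r' then 2 else 1)"
    unfolding gram_diag_sq_eq_sum
    by (simp add: Bochner_Integration.integral_sum Bochner_Integration.integrable_sum
        integral_norm_sq_entries_prod)
  also have "\<dots> = (\<Sum>r\<in>(UNIV::'r set). real CARD('r) + 1)"
  proof (rule sum.cong[OF refl])
    fix r :: 'r
    have "(\<Sum>r'\<in>UNIV. if r = r' then 2 else 1) = (\<Sum>r'\<in>(UNIV::'r set). 1 + (if r = r' then 1 else 0 :: real))"
      by (rule sum.cong) auto
    then show "(\<Sum>r'\<in>UNIV. if r = r' then 2 else 1) = real CARD('r) + 1"
      by (simp add: sum.distrib)
  qed
  finally show "integral\<^sup>L channel_dist (\<lambda>x::'r \<times> 't \<Rightarrow> complex. (Re (gram x i i))\<^sup>2)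
      = real CARD('r) * real CARD('r) + real CARD('r)"
    by (simp add: algebra_simps)
qed

lemma integrable_CN01_cnj_mult_self: "integrable CN01 (\<lambda>z. cnj z * z)"
  unfolding cnj_mult_self by (rule integrable_of_real) (rule integrable_CN01_norm_sq)

lemma integral_gram_offdiag_term:
  fixes r r' :: "'r::finite" and i k :: "'t::finite"
  assumes "k \<noteq> i"
  defines "f \<equiv> \<lambda>x::'r \<times> 't \<Rightarrow> complex. cnj (x (r, i)) * x (r, k) * (x (r', i) * cnj (x (r', k)))"
  shows "integrable channel_dist f" and "integral\<^sup>L channel_dist f = (if r = r' then 1 else 0)"
proof -
  have "integrable channel_dist f \<and> integral\<^sup>L channel_dist f = (if r = r' then 1 else 0)"
  proof (cases "r = r'")
    case True
    then have "f = (\<lambda>x. (cnj (x (r, i)) * x (r, i)) * (cnj (x (r, k)) * x (r, k)))"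
      by (auto simp: f_def fun_eq_iff mult_ac)
    moreover have "integral\<^sup>L CN01 (\<lambda>z. cnj z * z) = 1"
      unfolding cnj_mult_self by (simp only: integral_complex_of_real CN01_moment2) simp
    ultimately show ?thesis
      using integral_channel_dist_two_entries[OF integrable_CN01_cnj_mult_self integrable_CN01_cnj_mult_self,
          of "(r, i)" "(r, k)"] assms True by simp
  next
    case False
    \<comment> \<open>four independent entries, and the factor cnj (x (r, i)) has mean 0\<close>
    define S where "S = {(r, i), (r, k), (r', i), (r', k)}"
    define F where "F e = (if e = (r, i) \<or> e = (r', k) then cnj else (\<lambda>z::complex. z))" for e
    have int: "\<And>e. e \<in> S \<Longrightarrow> integrable CN01 (F e)"
      by (auto simp: F_def integrable_CN01_id)
    have "(\<Prod>e\<in>S. F e (x e)) = f x" for x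
      using False assms(1) by (simp add: S_def F_def f_def ac_simps)
    moreover have "(\<Prod>e\<in>S. integral\<^sup>L CN01 (F e)) = 0"
      by (rule prod_zero) (auto simp: S_def F_def CN01_mean intro!: bexI[of _ "(r, i)"])
    ultimately show ?thesis
      using integral_channel_dist_prod[of S F, OF int] False by simp
  qed
  then show "integrable channel_dist f" "integral\<^sup>L channel_dist f = (if r = r' then 1 else 0)"
    by auto
qed

lemma norm_sq_gram: "complex_of_real ((cmod (gram x i k))\<^sup>2) =
   (\<Sum>r\<in>UNIV. \<Sum>r'\<in>UNIV. cnj (x (r, i)) * x (r, k) * (x (r', i) * cnj (x (r', k))))"
  unfolding complex_norm_square by (simp add: gram_def sum_product)

lemma integral_gram_offdiag_norm_sq:
  fixes i k :: "'t::finite"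
  assumes "k \<noteq> i"
  shows "integrable channel_dist (\<lambda>x::'r::finite \<times> 't \<Rightarrow> complex. (cmod (gram x i k))\<^sup>2)"
    and "integral\<^sup>L channel_dist (\<lambda>x::'r::finite \<times> 't \<Rightarrow> complex. (cmod (gram x i k))\<^sup>2) = real CARD('r)"
proof -
  note offdiag = integral_gram_offdiag_term[OF assms]
  have int: "integrable channel_dist (\<lambda>x::'r \<times> 't \<Rightarrow> complex. complex_of_real ((cmod (gram x i k))\<^sup>2))"
    unfolding norm_sq_gram by (intro Bochner_Integration.integrable_sum offdiag(1))
  have "integral\<^sup>L channel_dist (\<lambda>x::'r \<times> 't \<Rightarrow> complex. complex_of_real ((cmod (gram x i k))\<^sup>2))
      = of_nat CARD('r)"
    unfolding norm_sq_gram
    by (simp add: Bochner_Integration.integral_sum Bochner_Integration.integrable_sum offdiag)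
  then show "integral\<^sup>L channel_dist (\<lambda>x::'r \<times> 't \<Rightarrow> complex. (cmod (gram x i k))\<^sup>2) = real CARD('r)"
    using integral_Re[OF int] by simp
  show "integrable channel_dist (\<lambda>x::'r::finite \<times> 't \<Rightarrow> complex. (cmod (gram x i k))\<^sup>2)"
    using integrable_Re[OF int] by simp
qed

lemma integral_gram_row_norm_sq:
  "integrable channel_dist (\<lambda>x::'r::finite \<times> 't::finite \<Rightarrow> complex. \<Sum>k\<in>UNIV. (cmod (gram x i k))\<^sup>2)"
  "integral\<^sup>L channel_dist (\<lambda>x::'r::finite \<times> 't::finite \<Rightarrow> complex. \<Sum>k\<in>UNIV. (cmod (gram x i k))\<^sup>2)
     = real CARD('r) * real CARD('r) + real CARD('r) + (real CARD('t) - 1) * real CARD('r)"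
proof -
  have split: "(\<Sum>k\<in>UNIV. (cmod (gram x i k))\<^sup>2)
      = (Re (gram x i i))\<^sup>2 + (\<Sum>k\<in>UNIV - {i}. (cmod (gram x i k))\<^sup>2)" for x :: "'r \<times> 't \<Rightarrow> complex"
    by (subst sum.remove[of UNIV i]) (auto simp: norm_gram_diag_sq)
  have int_offdiag: "integrable channel_dist (\<lambda>x::'r \<times> 't \<Rightarrow> complex. \<Sum>k\<in>UNIV - {i}. (cmod (gram x i k))\<^sup>2)"
    by (intro Bochner_Integration.integrable_sum integral_gram_offdiag_norm_sq(1)) simp
  show "integrable channel_dist (\<lambda>x::'r \<times> 't \<Rightarrow> complex. \<Sum>k\<in>UNIV. (cmod (gram x i k))\<^sup>2)"
    unfolding split by (intro Bochner_Integration.integrable_add integral_gram_diag_sq(1) int_offdiag)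
  have "integral\<^sup>L channel_dist (\<lambda>x::'r \<times> 't \<Rightarrow> complex. \<Sum>k\<in>UNIV - {i}. (cmod (gram x i k))\<^sup>2)
      = (\<Sum>k\<in>UNIV - {i}. real CARD('r))"
    by (simp add: Bochner_Integration.integral_sum integral_gram_offdiag_norm_sq)
  also have "\<dots> = (real CARD('t) - 1) * real CARD('r)"
    by (simp add: card_Diff_singleton)
  finally show "integral\<^sup>L channel_dist (\<lambda>x::'r \<times> 't \<Rightarrow> complex. \<Sum>k\<in>UNIV. (cmod (gram x i k))\<^sup>2)
     = real CARD('r) * real CARD('r) + real CARD('r) + (real CARD('t) - 1) * real CARD('r)"
    unfolding split
    by (simp add: Bochner_Integration.integral_add[OF integral_gram_diag_sq(1) int_offdiag] integral_gram_diag_sq(2))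
qed

section \<open>Differentiation under the integral sign\<close>

lemma has_real_derivative_integral:
  fixes f f' :: "real \<Rightarrow> 'a \<Rightarrow> real" and w :: "'a \<Rightarrow> real" and S :: "real set"
  assumes "convex S"
    and der: "\<And>x s. x \<in> space M \<Longrightarrow> s \<in> S \<Longrightarrow> ((\<lambda>t. f t x) has_real_derivative f' s x) (at s within S)"
    and bound: "\<And>x s. x \<in> space M \<Longrightarrow> s \<in> S \<Longrightarrow> \<bar>f' s x\<bar> \<le> w x"
    and "integrable M w"
    and int: "\<And>s. s \<in> S \<Longrightarrow> integrable M (f s)"
    and meas: "\<And>s. s \<in> S \<Longrightarrow> f' s \<in> borel_measurable M"
    and s: "s \<in> S"
  shows "((\<lambda>t. integral\<^sup>L M (f t)) has_real_derivative integral\<^sup>L M (f' s)) (at s within S)"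
  unfolding has_field_derivative_iff tendsto_at_iff_sequentially
proof (intro allI impI)
  fix X :: "nat \<Rightarrow> real"
  assume XS: "\<forall>i. X i \<in> S - {s}" and "X \<longlonglongrightarrow> s"
  define Q where "Q n x = (f (X n) x - f s x) / (X n - s)" for n x
  have quotient_eq: "((\<lambda>t. (integral\<^sup>L M (f t) - integral\<^sup>L M (f s)) / (t - s)) \<circ> X) n = integral\<^sup>L M (Q n)" for n
  proof -
    have "X n \<in> S"
      using XS by auto
    then show ?thesis
      unfolding Q_def comp_def by (simp add: Bochner_Integration.integral_diff[OF int int[OF s]])
  qed
  have "(\<lambda>n. integral\<^sup>L M (Q n)) \<longlonglongrightarrow> integral\<^sup>L M (f' s)"
  proof (rule integral_dominated_convergence[where w=w])
    show "Q n \<in> borel_measurable M" for n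
      using XS int[of "X n"] int[OF s] unfolding Q_def[abs_def]
      by (intro borel_measurable_divide borel_measurable_diff) auto
    show "AE x in M. (\<lambda>n. Q n x) \<longlonglongrightarrow> f' s x"
    proof (rule AE_I2)
      fix x assume "x \<in> space M"
      then have "((\<lambda>t. (f t x - f s x) / (t - s)) \<longlongrightarrow> f' s x) (at s within S)"
        using der s unfolding has_field_derivative_iff by blast
      then show "(\<lambda>n. Q n x) \<longlonglongrightarrow> f' s x"
        unfolding tendsto_at_iff_sequentially Q_def comp_def using XS \<open>X \<longlonglongrightarrow> s\<close> by auto
    qed
    show "AE x in M. norm (Q n x) \<le> w x" for n
    proof (rule AE_I2)
      fix x assume x: "x \<in> space M"
      have "X n \<in> S" "X n \<noteq> s" using XS by auto
      moreover have "norm (f (X n) x - f s x) \<le> w x * norm (X n - s)"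
        by (rule field_differentiable_bound[of S "\<lambda>t. f t x" "\<lambda>s. f' s x" "w x"])
           (use \<open>X n \<in> S\<close> s assms(1) der[OF x] bound[OF x] in auto)
      ultimately show "norm (Q n x) \<le> w x"
        unfolding Q_def by (simp add: divide_le_eq)
    qed
  qed (use assms s in auto)
  then show "((\<lambda>t. (integral\<^sup>L M (f t) - integral\<^sup>L M (f s)) / (t - s)) \<circ> X) \<longlonglongrightarrow> integral\<^sup>L M (f' s)"
    unfolding quotient_eq[abs_def] by simp
qed

section \<open>Resolvent of a positive semidefinite matrix\<close>

definition pos_semidef :: "complex^'n::finite^'n \<Rightarrow> bool" where
  "pos_semidef A \<longleftrightarrow> (\<forall>v. 0 \<le> Re (\<Sum>j\<in>UNIV. cnj (v $ j) * (A *v v) $ j))"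

abbreviation resolvent :: "complex^'n::finite^'n \<Rightarrow> real \<Rightarrow> complex^'n^'n" where
  "resolvent A c \<equiv> matrix_inv (mat 1 + c *\<^sub>R A)"

lemma inner_complex_vec: "(x::complex^'n::finite) \<bullet> y = Re (\<Sum>j\<in>UNIV. cnj (x $ j) * y $ j)"
  by (simp add: inner_vec_def inner_complex_def Re_sum)

lemma norm_axis_complex: "norm (axis k (1::complex) :: complex^'n::finite) = 1"
proof -
  have "(\<Sum>i\<in>UNIV. (norm (axis k (1::complex) $ i))\<^sup>2) = (\<Sum>i\<in>(UNIV::'n set). if i = k then 1 else 0)"
    by (rule sum.cong) (auto simp: axis_def)
  then show ?thesis
    by (simp add: norm_vec_def L2_set_def)
qed

lemma matrix_vector_mult_axis: "(B *v axis k 1) $ j = (B $ j $ k :: complex)"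
  by (simp add: matrix_vector_mult_def axis_def if_distrib cong: if_cong)

lemma matrix_matrix_mult_entry: "(A ** B) $ i $ j = (\<Sum>k\<in>UNIV. A $ i $ k * B $ k $ j)"
  by (simp add: matrix_matrix_mult_def)

lemma matrix_diff_ldistrib: "(A::'a::comm_ring_1^'n::finite^'m::finite) ** (B - C) = A ** B - A ** C"
  by (simp add: matrix_matrix_mult_def vec_eq_iff sum_subtractf algebra_simps)

lemma matrix_diff_rdistrib: "((A::'a::comm_ring_1^'n::finite^'m::finite) - B) ** C = A ** C - B ** C"
  by (simp add: matrix_matrix_mult_def vec_eq_iff sum_subtractf algebra_simps)

lemma matrix_neg_left: "(- (A::'a::comm_ring_1^'n::finite^'m::finite)) ** B = - (A ** B)"
  by (simp add: matrix_matrix_mult_def vec_eq_iff sum_negf)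

lemma matrix_neg_right: "(A::'a::comm_ring_1^'n::finite^'m::finite) ** (- B) = - (A ** B)"
  by (simp add: matrix_matrix_mult_def vec_eq_iff sum_negf)

lemma matrix_inv_inverse:
  fixes M :: "'a::field^'n::finite^'n"
  assumes "invertible M"
  shows "M ** matrix_inv M = mat 1" "matrix_inv M ** M = mat 1"
proof -
  have "\<exists>M'. M ** M' = mat 1 \<and> M' ** M = mat 1"
    using assms unfolding invertible_def by blast
  then have "M ** matrix_inv M = mat 1 \<and> matrix_inv M ** M = mat 1"
    unfolding matrix_inv_def by (rule someI_ex)
  then show "M ** matrix_inv M = mat 1" "matrix_inv M ** M = mat 1"
    by auto
qed

lemma matrix_inv_mat_1: "matrix_inv (mat 1 :: 'a::field^'n::finite^'n) = mat 1"
proof -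
  have "invertible (mat 1 :: 'a^'n^'n)"
    unfolding invertible_def by (intro exI[of _ "mat 1"]) simp
  from matrix_inv_inverse(1)[OF this] show ?thesis
    by simp
qed

lemma norm_sq_le_inner_id_plus:
  fixes A :: "complex^'n::finite^'n"
  assumes "pos_semidef A" "0 \<le> c"
  shows "(norm x)\<^sup>2 \<le> x \<bullet> ((mat 1 + c *\<^sub>R A) *v x)"
proof -
  have "(c *\<^sub>R A) *v x = c *\<^sub>R (A *v x)"
    by (simp add: vec_eq_iff matrix_vector_mult_def scaleR_sum_right)
  then have "(mat 1 + c *\<^sub>R A) *v x = x + c *\<^sub>R (A *v x)"
    by (simp add: matrix_vector_mult_add_rdistrib)
  then have "x \<bullet> ((mat 1 + c *\<^sub>R A) *v x) = (norm x)\<^sup>2 + c * (x \<bullet> (A *v x))"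
    by (simp add: inner_add_right power2_norm_eq_inner)
  moreover have "0 \<le> x \<bullet> (A *v x)"
    using assms(1) unfolding pos_semidef_def inner_complex_vec by auto
  ultimately show ?thesis
    using assms(2) by simp
qed

lemma norm_le_norm_id_plus:
  fixes A :: "complex^'n::finite^'n"
  assumes "pos_semidef A" "0 \<le> c"
  shows "norm x \<le> norm ((mat 1 + c *\<^sub>R A) *v x)"
proof (cases "x = 0")
  case False
  have "(norm x)\<^sup>2 \<le> norm x * norm ((mat 1 + c *\<^sub>R A) *v x)"
    using norm_sq_le_inner_id_plus[OF assms, of x] norm_cauchy_schwarz[of x "(mat 1 + c *\<^sub>R A) *v x"]
    by linarith
  then show ?thesis
    using False by (simp add: power2_eq_square mult_le_cancel_left)
qed simp

lemma invertible_id_plus_pos_semidef: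
  fixes A :: "complex^'n::finite^'n"
  assumes "pos_semidef A" "0 \<le> c"
  shows "invertible (mat 1 + c *\<^sub>R A)"
proof -
  have "(mat 1 + c *\<^sub>R A) *v x = 0 \<Longrightarrow> x = 0" for x :: "complex^'n"
    using norm_le_norm_id_plus[OF assms, of x] by simp
  then show ?thesis
    unfolding invertible_left_inverse matrix_left_invertible_ker by blast
qed

lemmas resolvent_inverse = matrix_inv_inverse[OF invertible_id_plus_pos_semidef]

lemma resolvent_entry_bound:
  fixes A :: "complex^'n::finite^'n"
  assumes "pos_semidef A" "0 \<le> c"
  shows "cmod (resolvent A c $ j $ k) \<le> 1"
proof -
  define x where "x = resolvent A c *v axis k 1"
  have "(mat 1 + c *\<^sub>R A) *v x = axis k 1"
    unfolding x_def matrix_vector_mul_assoc resolvent_inverse(1)[OF assms] by simp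
  then have "norm x \<le> 1"
    using norm_le_norm_id_plus[OF assms, of x] by (simp add: norm_axis_complex)
  moreover have "cmod (resolvent A c $ j $ k) \<le> norm x"
    unfolding x_def matrix_vector_mult_axis[symmetric] by (rule Finite_Cartesian_Product.norm_nth_le)
  ultimately show ?thesis
    by simp
qed

lemma norm_matrix_vector_mult_le:
  fixes M :: "complex^'n::finite^'n"
  shows "norm (M *v x) \<le> (\<Sum>j\<in>UNIV. \<Sum>k\<in>UNIV. cmod (M $ j $ k)) * norm x"
proof -
  have "norm (M *v x) \<le> (\<Sum>j\<in>UNIV. cmod ((M *v x) $ j))"
    by (simp add: norm_vec_def L2_set_le_sum)
  also have "\<dots> \<le> (\<Sum>j\<in>UNIV. \<Sum>k\<in>UNIV. cmod (M $ j $ k) * norm x)"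
  proof (rule sum_mono)
    fix j
    have "cmod ((M *v x) $ j) \<le> (\<Sum>k\<in>UNIV. cmod (M $ j $ k * x $ k))"
      unfolding matrix_vector_mult_def by (simp add: norm_sum)
    also have "\<dots> \<le> (\<Sum>k\<in>UNIV. cmod (M $ j $ k) * norm x)"
      by (intro sum_mono) (simp add: norm_mult mult_left_mono Finite_Cartesian_Product.norm_nth_le)
    finally show "cmod ((M *v x) $ j) \<le> (\<Sum>k\<in>UNIV. cmod (M $ j $ k) * norm x)" .
  qed
  finally show ?thesis
    by (simp add: sum_distrib_right)
qed

lemma resolvent_diag_lower_bound:
  fixes A :: "complex^'n::finite^'n"
  assumes "pos_semidef A" "0 \<le> c"
  defines "L \<equiv> (\<Sum>j\<in>UNIV. \<Sum>k\<in>UNIV. cmod ((mat 1 + c *\<^sub>R A) $ j $ k))"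
  shows "0 < L" and "1 / L\<^sup>2 \<le> Re (resolvent A c $ i $ i)"
proof -
  define x where "x = resolvent A c *v axis i 1"
  have Mx: "(mat 1 + c *\<^sub>R A) *v x = axis i 1"
    unfolding x_def matrix_vector_mul_assoc resolvent_inverse(1)[OF assms(1,2)] by simp
  have Lx: "1 \<le> L * norm x"
    using norm_matrix_vector_mult_le[of "mat 1 + c *\<^sub>R A" x] unfolding Mx L_def by (simp add: norm_axis_complex)
  moreover have "0 \<le> L"
    unfolding L_def by (intro sum_nonneg norm_ge_zero)
  ultimately show "0 < L"
    by (cases "L = 0") auto
  have "x \<bullet> axis i 1 = Re (x $ i)"
    unfolding inner_complex_vec by (simp add: axis_def if_distrib cong: if_cong)
  also have "x $ i = resolvent A c $ i $ i"
    unfolding x_def by (rule matrix_vector_mult_axis)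
  finally have "x \<bullet> ((mat 1 + c *\<^sub>R A) *v x) = Re (resolvent A c $ i $ i)"
    unfolding Mx .
  then have "(norm x)\<^sup>2 \<le> Re (resolvent A c $ i $ i)"
    using norm_sq_le_inner_id_plus[OF assms(1,2), of x] by simp
  moreover have "(1 / L)\<^sup>2 \<le> (norm x)\<^sup>2"
    using Lx \<open>0 < L\<close> by (intro power_mono) (simp_all add: divide_le_eq mult.commute)
  ultimately show "1 / L\<^sup>2 \<le> Re (resolvent A c $ i $ i)"
    by (simp add: power_divide)
qed

lemma resolvent_diff:
  fixes A1 A2 :: "complex^'n::finite^'n"
  assumes "pos_semidef A1" "0 \<le> c1" "pos_semidef A2" "0 \<le> c2"
  shows "resolvent A1 c1 - resolvent A2 c2
    = resolvent A1 c1 ** ((mat 1 + c2 *\<^sub>R A2) - (mat 1 + c1 *\<^sub>R A1)) ** resolvent A2 c2"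
proof -
  have "resolvent A1 c1 ** ((mat 1 + c2 *\<^sub>R A2) - (mat 1 + c1 *\<^sub>R A1)) ** resolvent A2 c2
     = resolvent A1 c1 ** ((mat 1 + c2 *\<^sub>R A2) ** resolvent A2 c2)
       - (resolvent A1 c1 ** (mat 1 + c1 *\<^sub>R A1)) ** resolvent A2 c2"
    by (simp only: matrix_diff_ldistrib matrix_diff_rdistrib matrix_mul_assoc)
  then show ?thesis
    using resolvent_inverse[OF assms(1,2)] resolvent_inverse[OF assms(3,4)] by simp
qed

lemma resolvent_diff_same:
  fixes A :: "complex^'n::finite^'n"
  assumes "pos_semidef A" "0 \<le> t" "0 \<le> c"
  shows "resolvent A t - resolvent A c = (c - t) *\<^sub>R (resolvent A t ** A ** resolvent A c)"
proof -
  have "(mat 1 + c *\<^sub>R A) - (mat 1 + t *\<^sub>R A) = (c - t) *\<^sub>R A"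
    by (simp add: algebra_simps)
  then show ?thesis
    using resolvent_diff[OF assms(1,2,1,3)] by (simp add: matrix_scalar_ac scalar_matrix_assoc)
qed

lemma resolvent_entry_diff_same:
  fixes A :: "complex^'n::finite^'n"
  assumes "pos_semidef A" "0 \<le> t" "0 \<le> c"
  shows "resolvent A t $ j $ k - resolvent A c $ j $ k = (c - t) *\<^sub>R (resolvent A t ** A ** resolvent A c) $ j $ k"
proof -
  have "resolvent A t $ j $ k - resolvent A c $ j $ k = (resolvent A t - resolvent A c) $ j $ k"
    by simp
  also have "\<dots> = ((c - t) *\<^sub>R (resolvent A t ** A ** resolvent A c)) $ j $ k"
    by (simp only: resolvent_diff_same[OF assms])
  finally show ?thesis
    by simp
qed

lemma norm_entry_mult3_le:
  fixes X D Y :: "complex^'n::finite^'n"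
  assumes "\<And>a b. cmod (X $ a $ b) \<le> 1" "\<And>a b. cmod (Y $ a $ b) \<le> 1"
  shows "cmod ((X ** D ** Y) $ j $ k) \<le> (\<Sum>l\<in>UNIV. \<Sum>m\<in>UNIV. cmod (D $ l $ m))"
proof -
  have "(X ** D ** Y) $ j $ k = (\<Sum>l\<in>UNIV. \<Sum>m\<in>UNIV. X $ j $ l * D $ l $ m * Y $ m $ k)"
    by (simp add: matrix_matrix_mult_entry sum_distrib_right) (rule sum.swap)
  then have "cmod ((X ** D ** Y) $ j $ k) \<le> (\<Sum>l\<in>UNIV. cmod (\<Sum>m\<in>UNIV. X $ j $ l * D $ l $ m * Y $ m $ k))"
    by (simp only: norm_sum)
  also have "\<dots> \<le> (\<Sum>l\<in>UNIV. \<Sum>m\<in>UNIV. cmod (X $ j $ l * D $ l $ m * Y $ m $ k))"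
    by (intro sum_mono norm_sum)
  also have "\<dots> \<le> (\<Sum>l\<in>UNIV. \<Sum>m\<in>UNIV. cmod (D $ l $ m))"
  proof (intro sum_mono)
    fix l m
    have "cmod (X $ j $ l) * cmod (D $ l $ m) * cmod (Y $ m $ k) \<le> 1 * cmod (D $ l $ m) * 1"
      by (intro mult_mono assms norm_ge_zero) auto
    then show "cmod (X $ j $ l * D $ l $ m * Y $ m $ k) \<le> cmod (D $ l $ m)"
      by (simp add: norm_mult)
  qed
  finally show ?thesis .
qed

lemma resolvent_entry_lipschitz:
  fixes A1 A2 :: "complex^'n::finite^'n"
  assumes "pos_semidef A1" "0 \<le> c1" "pos_semidef A2" "0 \<le> c2"
  shows "cmod (resolvent A1 c1 $ j $ k - resolvent A2 c2 $ j $ k)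
     \<le> (\<Sum>l\<in>UNIV. \<Sum>m\<in>UNIV. cmod (c2 *\<^sub>R A2 $ l $ m - c1 *\<^sub>R A1 $ l $ m))"
proof -
  have "resolvent A1 c1 $ j $ k - resolvent A2 c2 $ j $ k
      = (resolvent A1 c1 ** ((mat 1 + c2 *\<^sub>R A2) - (mat 1 + c1 *\<^sub>R A1)) ** resolvent A2 c2) $ j $ k"
    by (simp only: resolvent_diff[OF assms, symmetric] vector_minus_component)
  then show ?thesis
    using norm_entry_mult3_le[of "resolvent A1 c1" "resolvent A2 c2" "(mat 1 + c2 *\<^sub>R A2) - (mat 1 + c1 *\<^sub>R A1)" j k]
      resolvent_entry_bound[OF assms(1,2)] resolvent_entry_bound[OF assms(3,4)]
    by simp
qed

lemma tendsto_resolvent_entry: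
  fixes A :: "complex^'n::finite^'n"
  assumes "pos_semidef A" "0 \<le> c"
  shows "((\<lambda>t. resolvent A t $ j $ k) \<longlongrightarrow> resolvent A c $ j $ k) (at c within {0..})"
proof -
  let ?S = "\<Sum>l\<in>UNIV. \<Sum>m\<in>UNIV. cmod (A $ l $ m)"
  have "((\<lambda>t. resolvent A t $ j $ k - resolvent A c $ j $ k) \<longlongrightarrow> 0) (at c within {0..})"
  proof (rule Lim_null_comparison)
    show "eventually (\<lambda>t. norm (resolvent A t $ j $ k - resolvent A c $ j $ k) \<le> \<bar>t - c\<bar> * ?S)
        (at c within {0..})"
      unfolding eventually_at_filter
    proof (intro always_eventually allI impI)
      fix t :: real assume "t \<in> {0..}"
      then have "resolvent A t $ j $ k - resolvent A c $ j $ k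
          = (c - t) *\<^sub>R (resolvent A t ** A ** resolvent A c) $ j $ k"
        using resolvent_entry_diff_same[OF assms(1) _ assms(2)] by simp
      then show "norm (resolvent A t $ j $ k - resolvent A c $ j $ k) \<le> \<bar>t - c\<bar> * ?S"
        using norm_entry_mult3_le[of "resolvent A t" "resolvent A c" A j k] \<open>t \<in> {0..}\<close>
          resolvent_entry_bound[OF assms(1)] resolvent_entry_bound[OF assms]
        by (auto simp: abs_minus_commute intro!: mult_left_mono)
    qed
    show "((\<lambda>t. \<bar>t - c\<bar> * ?S) \<longlongrightarrow> 0) (at c within {0..})"
      by (auto intro!: tendsto_eq_intros)
  qed
  then show ?thesis
    by (simp add: LIM_zero_iff)
qed

lemma has_vector_derivative_complex_quotient:
  fixes f :: "real \<Rightarrow> complex"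
  assumes "((\<lambda>t. (f t - f s) /\<^sub>R (t - s)) \<longlongrightarrow> D) (at s within S)"
  shows "(f has_vector_derivative D) (at s within S)"
  using tendsto_Re[OF assms] tendsto_Im[OF assms]
  unfolding has_vector_derivative_complex_iff has_field_derivative_iff
  by (simp add: divide_inverse mult.commute)

lemma has_vector_derivative_resolvent_entry:
  fixes A :: "complex^'n::finite^'n"
  assumes "pos_semidef A" "0 \<le> c"
  shows "((\<lambda>t. resolvent A t $ j $ k) has_vector_derivative (- (resolvent A c ** A ** resolvent A c) $ j $ k))
           (at c within {0..})"
proof (rule has_vector_derivative_complex_quotient)
  have lim: "((\<lambda>t. - (resolvent A t ** A ** resolvent A c) $ j $ k)
      \<longlongrightarrow> - (resolvent A c ** A ** resolvent A c) $ j $ k) (at c within {0..})"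
    unfolding vector_uminus_component matrix_matrix_mult_entry
    by (intro tendsto_intros tendsto_resolvent_entry[OF assms])
  show "((\<lambda>t. (resolvent A t $ j $ k - resolvent A c $ j $ k) /\<^sub>R (t - c))
      \<longlongrightarrow> - (resolvent A c ** A ** resolvent A c) $ j $ k) (at c within {0..})"
  proof (rule Lim_transform_eventually[OF lim])
    show "eventually (\<lambda>t. - (resolvent A t ** A ** resolvent A c) $ j $ k
        = (resolvent A t $ j $ k - resolvent A c $ j $ k) /\<^sub>R (t - c)) (at c within {0..})"
      unfolding eventually_at_filter
    proof (intro always_eventually allI impI)
      fix t :: real assume "t \<noteq> c" "t \<in> {0..}"
      then have "resolvent A t $ j $ k - resolvent A c $ j $ k
          = (c - t) *\<^sub>R (resolvent A t ** A ** resolvent A c) $ j $ k"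
        using resolvent_entry_diff_same[OF assms(1) _ assms(2)] by simp
      then show "- (resolvent A t ** A ** resolvent A c) $ j $ k
          = (resolvent A t $ j $ k - resolvent A c $ j $ k) /\<^sub>R (t - c)"
        using \<open>t \<noteq> c\<close> by (simp add: scaleR_conv_of_real field_simps)
    qed
  qed
qed

definition has_matrix_derivative ::
    "(real \<Rightarrow> complex^'n::finite^'m::finite) \<Rightarrow> complex^'n^'m \<Rightarrow> real filter \<Rightarrow> bool" where
  "has_matrix_derivative X D F \<longleftrightarrow> (\<forall>j k. ((\<lambda>t. X t $ j $ k) has_vector_derivative D $ j $ k) F)"

lemma has_matrix_derivative_mult:
  fixes X :: "real \<Rightarrow> complex^'n::finite^'m::finite" and Y :: "real \<Rightarrow> complex^'p::finite^'n"
  assumes "has_matrix_derivative X DX (at c within S)" "has_matrix_derivative Y DY (at c within S)"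
  shows "has_matrix_derivative (\<lambda>t. X t ** Y t) (X c ** DY + DX ** Y c) (at c within S)"
  unfolding has_matrix_derivative_def
proof (intro allI)
  fix j k
  have "((\<lambda>t. \<Sum>l\<in>UNIV. X t $ j $ l * Y t $ l $ k) has_vector_derivative
      (\<Sum>l\<in>UNIV. X c $ j $ l * DY $ l $ k + DX $ j $ l * Y c $ l $ k)) (at c within S)"
    using assms unfolding has_matrix_derivative_def
    by (intro has_vector_derivative_sum has_vector_derivative_mult) auto
  then show "((\<lambda>t. (X t ** Y t) $ j $ k) has_vector_derivative (X c ** DY + DX ** Y c) $ j $ k) (at c within S)"
    by (simp add: matrix_matrix_mult_entry sum.distrib)
qed

lemma has_matrix_derivative_const: "has_matrix_derivative (\<lambda>t. C) 0 F"
  unfolding has_matrix_derivative_def by (simp add: has_vector_derivative_const)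

lemma has_matrix_derivative_resolvent:
  fixes A :: "complex^'n::finite^'n"
  assumes "pos_semidef A" "0 \<le> c"
  shows "has_matrix_derivative (resolvent A) (- (resolvent A c ** A ** resolvent A c)) (at c within {0..})"
  unfolding has_matrix_derivative_def using has_vector_derivative_resolvent_entry[OF assms] by simp

section \<open>The rate of a single stream and its derivatives\<close>

definition diag_R :: "complex^'n::finite^'n \<Rightarrow> 'n \<Rightarrow> real \<Rightarrow> real" where
  "diag_R A i t = Re (resolvent A t $ i $ i)"

definition diag_RAR :: "complex^'n::finite^'n \<Rightarrow> 'n \<Rightarrow> real \<Rightarrow> real" where
  "diag_RAR A i t = Re ((resolvent A t ** A ** resolvent A t) $ i $ i)"

definition diag_RARAR :: "complex^'n::finite^'n \<Rightarrow> 'n \<Rightarrow> real \<Rightarrow> real" where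
  "diag_RARAR A i t = Re ((resolvent A t ** A ** resolvent A t ** A ** resolvent A t) $ i $ i)"

(* Since the SINR is 1 / diag_R - 1, the rate log2 (1 + SINR) of a stream is - log2 diag_R. *)
definition stream_rate :: "complex^'n::finite^'n \<Rightarrow> 'n \<Rightarrow> real \<Rightarrow> real" where
  "stream_rate A i t = - ln (diag_R A i t) / ln 2"

definition stream_rate_d1 :: "complex^'n::finite^'n \<Rightarrow> 'n \<Rightarrow> real \<Rightarrow> real" where
  "stream_rate_d1 A i t = diag_RAR A i t / (diag_R A i t * ln 2)"

definition stream_rate_d2 :: "complex^'n::finite^'n \<Rightarrow> 'n \<Rightarrow> real \<Rightarrow> real" where
  "stream_rate_d2 A i t =
     ((diag_RAR A i t)\<^sup>2 - 2 * diag_RARAR A i t * diag_R A i t) / ((diag_R A i t)\<^sup>2 * ln 2)"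

lemma has_real_derivative_diag_R:
  assumes "pos_semidef A" "0 \<le> c"
  shows "(diag_R A i has_real_derivative - diag_RAR A i c) (at c within {0..})"
  using has_field_derivative_Re[OF has_vector_derivative_resolvent_entry[OF assms, of i i]]
  unfolding diag_R_def[abs_def] diag_RAR_def by simp

lemma has_real_derivative_diag_RAR:
  assumes "pos_semidef A" "0 \<le> c"
  shows "(diag_RAR A i has_real_derivative - 2 * diag_RARAR A i c) (at c within {0..})"
proof -
  let ?R = "resolvent A c"
  note R = has_matrix_derivative_resolvent[OF assms]
  have "has_matrix_derivative (\<lambda>t. resolvent A t ** A ** resolvent A t)
      ((?R ** A) ** (- (?R ** A ** ?R)) + (?R ** 0 + (- (?R ** A ** ?R)) ** A) ** ?R) (at c within {0..})"
    by (intro has_matrix_derivative_mult R has_matrix_derivative_const)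
  then have deriv: "(diag_RAR A i has_real_derivative
      Re (((?R ** A) ** (- (?R ** A ** ?R)) + (?R ** 0 + (- (?R ** A ** ?R)) ** A) ** ?R) $ i $ i))
      (at c within {0..})"
    unfolding has_matrix_derivative_def diag_RAR_def[abs_def] by (intro has_field_derivative_Re) auto
  have eq: "(?R ** A) ** (- (?R ** A ** ?R)) + (?R ** 0 + (- (?R ** A ** ?R)) ** A) ** ?R
     = - (?R ** A ** ?R ** A ** ?R) - (?R ** A ** ?R ** A ** ?R)"
    by (simp only: times0_right add_0_left matrix_neg_left matrix_neg_right matrix_mul_assoc) simp
  from deriv[unfolded eq] show ?thesis
    unfolding diag_RARAR_def by simp
qed

lemma diag_R_pos:
  assumes "pos_semidef A" "0 \<le> c"
  shows "0 < diag_R A i c"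
  using resolvent_diag_lower_bound[OF assms] unfolding diag_R_def
  by (smt (verit) divide_pos_pos zero_less_power)

lemma diag_R_le_1:
  assumes "pos_semidef A" "0 \<le> c"
  shows "diag_R A i c \<le> 1"
  using resolvent_entry_bound[OF assms, of i i] abs_Re_le_cmod[of "resolvent A c $ i $ i"]
  unfolding diag_R_def by linarith

lemma has_real_derivative_stream_rate:
  assumes "pos_semidef A" "0 \<le> c"
  shows "(stream_rate A i has_real_derivative stream_rate_d1 A i c) (at c within {0..})"
proof -
  have "((\<lambda>t. ln (diag_R A i t)) has_real_derivative (1 / diag_R A i c) * (- diag_RAR A i c)) (at c within {0..})"
    by (rule DERIV_chain2[OF DERIV_ln_divide[OF diag_R_pos[OF assms]] has_real_derivative_diag_R[OF assms]])
  from DERIV_cdivide[OF DERIV_minus[OF this], of "ln 2"] show ?thesis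
    unfolding stream_rate_def[abs_def] stream_rate_d1_def by simp
qed

lemma has_real_derivative_stream_rate_d1:
  assumes "pos_semidef A" "0 \<le> c"
  shows "(stream_rate_d1 A i has_real_derivative stream_rate_d2 A i c) (at c within {0..})"
proof -
  have q: "0 < diag_R A i c"
    by (rule diag_R_pos[OF assms])
  have "((\<lambda>t. diag_RAR A i t / (diag_R A i t * ln 2)) has_real_derivative
     ((- 2 * diag_RARAR A i c) * (diag_R A i c * ln 2) - diag_RAR A i c * ((- diag_RAR A i c) * ln 2))
       / (diag_R A i c * ln 2)\<^sup>2) (at c within {0..})"
    using DERIV_divide[OF has_real_derivative_diag_RAR[OF assms]
        DERIV_cmult_right[where c="ln 2", OF has_real_derivative_diag_R[OF assms]]] q
    by (simp add: power2_eq_square)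
  moreover have "((- 2 * diag_RARAR A i c) * (diag_R A i c * ln 2) - diag_RAR A i c * ((- diag_RAR A i c) * ln 2))
       / (diag_R A i c * ln 2)\<^sup>2 = stream_rate_d2 A i c"
    unfolding stream_rate_d2_def using q by (simp add: field_simps power2_eq_square)
  ultimately show ?thesis
    unfolding stream_rate_d1_def[abs_def] by simp
qed

lemma diag_R_0: "diag_R A i 0 = 1"
  by (simp add: diag_R_def matrix_inv_mat_1) (simp add: mat_def)

lemma stream_rate_0: "stream_rate A i 0 = 0"
  by (simp add: stream_rate_def diag_R_0)

lemma stream_rate_d1_0: "stream_rate_d1 A i 0 = Re (A $ i $ i) / ln 2"
  by (simp add: stream_rate_d1_def diag_R_0 diag_RAR_def matrix_inv_mat_1)

lemma stream_rate_d2_0: "stream_rate_d2 A i 0 = ((Re (A $ i $ i))\<^sup>2 - 2 * Re ((A ** A) $ i $ i)) / ln 2"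
  by (simp add: stream_rate_d2_def diag_R_0 diag_RAR_def diag_RARAR_def matrix_inv_mat_1)

lemma norm_entry_mult_le:
  fixes X Y :: "complex^'n::finite^'n"
  assumes "\<And>a b. cmod (X $ a $ b) \<le> bx" "\<And>a b. cmod (Y $ a $ b) \<le> by"
  shows "cmod ((X ** Y) $ j $ k) \<le> real CARD('n) * (bx * by)"
proof -
  have "cmod ((X ** Y) $ j $ k) \<le> (\<Sum>l\<in>UNIV. cmod (X $ j $ l * Y $ l $ k))"
    unfolding matrix_matrix_mult_entry by (rule norm_sum)
  also have "\<dots> \<le> (\<Sum>l\<in>(UNIV::'n set). bx * by)"
    by (intro sum_mono) (simp add: norm_mult, intro mult_mono assms norm_ge_zero,
        use assms[of j l] norm_ge_zero[of "X $ j $ l"] in linarith)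
  finally show ?thesis
    by simp
qed

context
  fixes A :: "complex^'n::finite^'n" and K c :: real
  assumes psd: "pos_semidef A" and c: "0 \<le> c" "c \<le> 1"
    and A_bound: "\<And>a b. cmod (A $ a $ b) \<le> K" and K: "1 \<le> K"
begin

lemma abs_diag_RAR_le: "\<bar>diag_RAR A i c\<bar> \<le> real CARD('n)^2 * K"
proof -
  have "\<bar>diag_RAR A i c\<bar> \<le> cmod ((resolvent A c ** A ** resolvent A c) $ i $ i)"
    unfolding diag_RAR_def by (rule abs_Re_le_cmod)
  also have "\<dots> \<le> (\<Sum>l\<in>UNIV. \<Sum>m\<in>UNIV. cmod (A $ l $ m))"
    by (intro norm_entry_mult3_le resolvent_entry_bound[OF psd c(1)])
  also have "\<dots> \<le> (\<Sum>l\<in>(UNIV::'n set). \<Sum>m\<in>(UNIV::'n set). K)"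
    by (intro sum_mono A_bound)
  finally show ?thesis
    by (simp add: power2_eq_square)
qed

lemma abs_diag_RARAR_le: "\<bar>diag_RARAR A i c\<bar> \<le> real CARD('n)^4 * K^2"
proof -
  let ?R = "resolvent A c"
  have ARA: "cmod ((A ** ?R ** A) $ a $ b) \<le> real CARD('n) * ((real CARD('n) * (K * 1)) * K)" for a b
    by (intro norm_entry_mult_le) (use A_bound resolvent_entry_bound[OF psd c(1)] in auto)
  have "?R ** A ** ?R ** A ** ?R = ?R ** (A ** ?R ** A) ** ?R"
    by (simp add: matrix_mul_assoc)
  then have "\<bar>diag_RARAR A i c\<bar> \<le> cmod ((?R ** (A ** ?R ** A) ** ?R) $ i $ i)"
    unfolding diag_RARAR_def by (simp only: abs_Re_le_cmod)
  also have "\<dots> \<le> (\<Sum>l\<in>UNIV. \<Sum>m\<in>UNIV. cmod ((A ** ?R ** A) $ l $ m))"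
    by (intro norm_entry_mult3_le resolvent_entry_bound[OF psd c(1)])
  also have "\<dots> \<le> (\<Sum>l\<in>(UNIV::'n set). \<Sum>m\<in>(UNIV::'n set). real CARD('n) * ((real CARD('n) * (K * 1)) * K))"
    by (intro sum_mono ARA)
  finally show ?thesis
    by (simp add: power2_eq_square power4_eq_xxxx mult_ac)
qed

lemma inverse_diag_R_le: "1 / diag_R A i c \<le> 4 * real CARD('n)^4 * K^2"
proof -
  define L where "L = (\<Sum>j\<in>UNIV. \<Sum>k\<in>UNIV. cmod ((mat 1 + c *\<^sub>R A) $ j $ k))"
  have L: "0 < L" "1 / L\<^sup>2 \<le> diag_R A i c"
    using resolvent_diag_lower_bound[OF psd c(1)] unfolding L_def diag_R_def by auto
  have "L \<le> (\<Sum>j\<in>(UNIV::'n set). \<Sum>k\<in>(UNIV::'n set). 2 * K)"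
    unfolding L_def
  proof (intro sum_mono)
    fix j k :: 'n
    have "cmod ((mat 1 + c *\<^sub>R A) $ j $ k) \<le> cmod ((mat 1 :: complex^'n^'n) $ j $ k) + cmod ((c *\<^sub>R A) $ j $ k)"
      unfolding vector_add_component by (rule norm_triangle_ineq)
    also have "\<dots> \<le> 1 + K"
    proof (rule add_mono)
      show "cmod ((mat 1 :: complex^'n^'n) $ j $ k) \<le> 1"
        by (simp add: mat_def)
      show "cmod ((c *\<^sub>R A) $ j $ k) \<le> K"
        using A_bound[of j k] c mult_left_le_one_le[of "cmod (A $ j $ k)" c] by simp
    qed
    finally show "cmod ((mat 1 + c *\<^sub>R A) $ j $ k) \<le> 2 * K"
      using K by simp
  qed
  then have "L \<le> 2 * K * real CARD('n)^2"
    by (simp add: power2_eq_square mult_ac)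
  have "1 / diag_R A i c \<le> L\<^sup>2"
    using L diag_R_pos[OF psd c(1)] by (simp add: field_simps)
  also have "\<dots> \<le> (2 * K * real CARD('n)^2)\<^sup>2"
    by (rule power_mono[OF \<open>L \<le> 2 * K * real CARD('n)^2\<close>]) (use L in simp)
  also have "\<dots> = 4 * real CARD('n)^4 * K^2"
    by (simp add: power2_eq_square power4_eq_xxxx mult_ac)
  finally show ?thesis .
qed

lemma abs_stream_rate_d1_le: "\<bar>stream_rate_d1 A i c\<bar> \<le> 48 * real CARD('n)^12 * K^6 / ln 2"
proof -
  let ?N = "real CARD('n)"
  have q: "0 < diag_R A i c"
    by (rule diag_R_pos[OF psd c(1)])
  have "\<bar>stream_rate_d1 A i c\<bar> = \<bar>diag_RAR A i c\<bar> * (1 / diag_R A i c) / ln 2"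
    unfolding stream_rate_d1_def using q by (simp add: abs_mult)
  also have "\<dots> \<le> (?N^2 * K) * (4 * ?N^4 * K^2) / ln 2"
    by (intro divide_right_mono mult_mono abs_diag_RAR_le inverse_diag_R_le) (use q K in auto)
  also have "\<dots> \<le> 48 * ?N^12 * K^6 / ln 2"
  proof (intro divide_right_mono)
    have "(?N^2 * K) * (4 * ?N^4 * K^2) = 4 * (?N^6 * K^3)"
      by (simp add: eval_nat_numeral mult_ac)
    also have "\<dots> \<le> 4 * (?N^12 * K^6)"
      using K by (intro mult_left_mono mult_mono power_increasing) auto
    also have "\<dots> \<le> 48 * ?N^12 * K^6"
      using K by simp
    finally show "(?N^2 * K) * (4 * ?N^4 * K^2) \<le> 48 * ?N^12 * K^6" .
  qed simp
  finally show ?thesis .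
qed

lemma abs_stream_rate_d2_le: "\<bar>stream_rate_d2 A i c\<bar> \<le> 48 * real CARD('n)^12 * K^6 / ln 2"
proof -
  let ?N = "real CARD('n)"
  let ?q = "diag_R A i c" and ?p = "diag_RAR A i c" and ?r = "diag_RARAR A i c"
  have q: "0 < ?q" "?q \<le> 1"
    by (rule diag_R_pos[OF psd c(1)], rule diag_R_le_1[OF psd c(1)])
  have "\<bar>?p\<^sup>2 - 2 * ?r * ?q\<bar> \<le> ?p\<^sup>2 + 2 * \<bar>?r\<bar> * ?q"
    using abs_triangle_ineq4[of "?p\<^sup>2" "2 * ?r * ?q"] q by (simp add: abs_mult)
  also have "?p\<^sup>2 \<le> (?N^2 * K)\<^sup>2"
    using abs_diag_RAR_le[of i] by (metis abs_ge_zero power2_abs power_mono)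
  also have "2 * \<bar>?r\<bar> * ?q \<le> 2 * (?N^4 * K^2) * 1"
    using abs_diag_RARAR_le[of i] q by (intro mult_mono) auto
  finally have num: "\<bar>?p\<^sup>2 - 2 * ?r * ?q\<bar> \<le> 3 * (?N^4 * K^2)"
    by (simp add: power2_eq_square power4_eq_xxxx mult_ac)
  have "\<bar>stream_rate_d2 A i c\<bar> = \<bar>?p\<^sup>2 - 2 * ?r * ?q\<bar> * (1 / ?q)\<^sup>2 / ln 2"
    unfolding stream_rate_d2_def using q by (simp add: abs_mult power_divide)
  also have "\<dots> \<le> (3 * (?N^4 * K^2)) * (4 * ?N^4 * K^2)\<^sup>2 / ln 2"
    by (intro divide_right_mono mult_mono num power_mono inverse_diag_R_le) (use q in auto)
  also have "\<dots> = 48 * ?N^12 * K^6 / ln 2"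
    by (simp add: eval_nat_numeral mult_ac)
  finally show ?thesis .
qed

end

section \<open>The MMSE sum rate of the Gaussian channel\<close>

definition snr_gram :: "complex^'t::finite^'r::finite \<Rightarrow> complex^'t^'t" where
  "snr_gram H = (1 / real CARD('t)) *\<^sub>R (adjoint_mat H ** H)"

abbreviation channel_gram :: "('r::finite \<times> 't::finite \<Rightarrow> complex) \<Rightarrow> complex^'t^'t" where
  "channel_gram x \<equiv> snr_gram (to_matrix x :: complex^'t^'r)"

lemma snr_gram_entry:
  fixes H :: "complex^'t::finite^'r::finite"
  shows "snr_gram H $ a $ b = complex_of_real (1 / real CARD('t)) * (\<Sum>r\<in>UNIV. cnj (H $ r $ a) * H $ r $ b)"
proof -
  have "snr_gram H $ a $ b = (1 / real CARD('t)) *\<^sub>R ((adjoint_mat H ** H) $ a $ b)"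
    by (simp add: snr_gram_def)
  then show ?thesis
    by (simp add: matrix_matrix_mult_entry adjoint_mat_def scaleR_conv_of_real)
qed

lemma pos_semidef_snr_gram: "pos_semidef (snr_gram (H :: complex^'t::finite^'r::finite))"
  unfolding pos_semidef_def
proof
  fix v :: "complex^'t"
  define w where "w r = (\<Sum>k\<in>UNIV. H $ r $ k * v $ k)" for r
  have "(\<Sum>j\<in>UNIV. cnj (v $ j) * (snr_gram H *v v) $ j)
     = complex_of_real (1 / real CARD('t)) *
         (\<Sum>j\<in>UNIV. \<Sum>k\<in>UNIV. \<Sum>r\<in>UNIV. cnj (v $ j) * cnj (H $ r $ j) * (H $ r $ k * v $ k))"
    by (simp add: matrix_vector_mult_def snr_gram_entry sum_distrib_left sum_distrib_right mult_ac)
  also have "(\<Sum>j\<in>UNIV. \<Sum>k\<in>UNIV. \<Sum>r\<in>UNIV. cnj (v $ j) * cnj (H $ r $ j) * (H $ r $ k * v $ k))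
     = (\<Sum>r\<in>UNIV. \<Sum>j\<in>UNIV. \<Sum>k\<in>UNIV. cnj (v $ j) * cnj (H $ r $ j) * (H $ r $ k * v $ k))"
    by (subst sum.swap) (intro sum.cong refl sum.swap)
  also have "\<dots> = (\<Sum>r\<in>UNIV. cnj (w r) * w r)"
    by (simp add: w_def sum_distrib_left sum_distrib_right mult_ac)
  finally show "0 \<le> Re (\<Sum>j\<in>UNIV. cnj (v $ j) * (snr_gram H *v v) $ j)"
    unfolding cnj_mult_self by (simp add: Re_sum sum_nonneg)
qed

lemma to_matrix_nth: "to_matrix x $ r $ a = x (r, a)"
  by (simp add: to_matrix_def)

lemma channel_gram_entry:
  fixes x :: "'r::finite \<times> 't::finite \<Rightarrow> complex"
  shows "channel_gram x $ a $ b = complex_of_real (1 / real CARD('t)) * gram x a b"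
  by (simp add: snr_gram_entry to_matrix_nth gram_def)

lemma norm_gram_le_energy:
  fixes x :: "'r::finite \<times> 't::finite \<Rightarrow> complex"
  shows "cmod (gram x a b) \<le> energy x"
proof -
  have col: "(\<Sum>r\<in>UNIV. (cmod (x (r, c)))\<^sup>2) \<le> (\<Sum>e\<in>UNIV. (cmod (x e))\<^sup>2)" for c
  proof -
    have "(\<Sum>e\<in>UNIV. (cmod (x e))\<^sup>2) = (\<Sum>r\<in>UNIV. \<Sum>t\<in>UNIV. (cmod (x (r, t)))\<^sup>2)"
      by (simp add: sum.cartesian_product flip: UNIV_Times_UNIV)
    also have "\<dots> \<ge> (\<Sum>r\<in>UNIV. (cmod (x (r, c)))\<^sup>2)"
      by (intro sum_mono member_le_sum) auto
    finally show ?thesis .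
  qed
  have "cmod (gram x a b) \<le> (\<Sum>r\<in>UNIV. cmod (cnj (x (r, a)) * x (r, b)))"
    unfolding gram_def by (rule norm_sum)
  also have "\<dots> \<le> (\<Sum>r\<in>UNIV. ((cmod (x (r, a)))\<^sup>2 + (cmod (x (r, b)))\<^sup>2) / 2)"
  proof (rule sum_mono)
    fix r
    have "0 \<le> (cmod (x (r, a)) - cmod (x (r, b)))\<^sup>2"
      by simp
    then show "cmod (cnj (x (r, a)) * x (r, b)) \<le> ((cmod (x (r, a)))\<^sup>2 + (cmod (x (r, b)))\<^sup>2) / 2"
      by (simp add: norm_mult power2_diff)
  qed
  also have "\<dots> = ((\<Sum>r\<in>UNIV. (cmod (x (r, a)))\<^sup>2) + (\<Sum>r\<in>UNIV. (cmod (x (r, b)))\<^sup>2)) / 2"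
    by (simp only: sum.distrib[symmetric] sum_divide_distrib)
  also have "\<dots> \<le> ((\<Sum>e\<in>UNIV. (cmod (x e))\<^sup>2) + (\<Sum>e\<in>UNIV. (cmod (x e))\<^sup>2)) / 2"
    by (intro divide_right_mono add_mono col) auto
  also have "\<dots> \<le> energy x"
    by (simp add: energy_def)
  finally show ?thesis .
qed

lemma norm_channel_gram_le_energy:
  fixes x :: "'r::finite \<times> 't::finite \<Rightarrow> complex"
  shows "cmod (channel_gram x $ a $ b) \<le> energy x"
proof -
  have "cmod (channel_gram x $ a $ b) = (1 / real CARD('t)) * cmod (gram x a b)"
    unfolding channel_gram_entry norm_mult norm_of_real by simp
  also have "\<dots> \<le> 1 * energy x"
    using energy_ge_1[of x] by (intro mult_mono norm_gram_le_energy) auto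
  finally show ?thesis
    by simp
qed

lemma borel_measurable_to_matrix[measurable]:
  "(to_matrix :: ('r::finite \<times> 't::finite \<Rightarrow> complex) \<Rightarrow> complex^'t^'r) \<in> borel_measurable channel_dist"
proof (subst borel_measurable_euclidean_space, intro ballI)
  fix b :: "complex^'t^'r"
  have "(\<lambda>x. to_matrix x \<bullet> b) = (\<lambda>x. \<Sum>i\<in>UNIV. \<Sum>j\<in>UNIV. x (i, j) \<bullet> (b $ i $ j))"
    by (simp add: inner_vec_def to_matrix_nth)
  moreover have "(\<lambda>x::'r \<times> 't \<Rightarrow> complex. \<Sum>i\<in>UNIV. \<Sum>j\<in>UNIV. x (i, j) \<bullet> (b $ i $ j))
      \<in> borel_measurable channel_dist"
    unfolding channel_dist_def by measurable
  ultimately show "(\<lambda>x. to_matrix x \<bullet> b) \<in> borel_measurable channel_dist"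
    by simp
qed

lemma borel_measurable_cnj[measurable]: "cnj \<in> borel_measurable borel"
  by (intro borel_measurable_continuous_onI continuous_on_cnj continuous_on_id)

lemma borel_measurable_channel_gram_entry[measurable]:
  "(\<lambda>x::'r::finite \<times> 't::finite \<Rightarrow> complex. channel_gram x $ a $ b) \<in> borel_measurable channel_dist"
  unfolding channel_gram_entry gram_def channel_dist_def by measurable

lemma continuous_on_resolvent_snr_gram_entry:
  assumes "0 \<le> s"
  shows "continuous_on UNIV (\<lambda>H::complex^'t::finite^'r::finite. resolvent (snr_gram H) s $ j $ k)"
proof (rule continuous_at_imp_continuous_on, intro ballI)
  fix H0 :: "complex^'t^'r"
  let ?g = "\<lambda>H::complex^'t^'r. \<Sum>l\<in>UNIV. \<Sum>m\<in>UNIV. cmod (s *\<^sub>R snr_gram H0 $ l $ m - s *\<^sub>R snr_gram H $ l $ m)"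
  have "((\<lambda>H. resolvent (snr_gram H) s $ j $ k - resolvent (snr_gram H0) s $ j $ k) \<longlongrightarrow> 0) (at H0)"
  proof (rule Lim_null_comparison)
    show "eventually (\<lambda>H. norm (resolvent (snr_gram H) s $ j $ k - resolvent (snr_gram H0) s $ j $ k) \<le> ?g H) (at H0)"
      by (intro always_eventually allI resolvent_entry_lipschitz pos_semidef_snr_gram assms)
    have "(?g \<longlongrightarrow> (\<Sum>l\<in>UNIV. \<Sum>m\<in>UNIV. cmod (s *\<^sub>R snr_gram H0 $ l $ m - s *\<^sub>R snr_gram H0 $ l $ m))) (at H0)"
      unfolding snr_gram_entry by (intro tendsto_intros)
    then show "(?g \<longlongrightarrow> 0) (at H0)"
      by simp
  qed
  then show "isCont (\<lambda>H. resolvent (snr_gram H) s $ j $ k) H0"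
    unfolding isCont_def by (simp add: LIM_zero_iff)
qed

lemma borel_measurable_resolvent_channel_gram_entry:
  assumes "0 \<le> s"
  shows "(\<lambda>x::'r::finite \<times> 't::finite \<Rightarrow> complex. resolvent (channel_gram x) s $ j $ k) \<in> borel_measurable channel_dist"
  by (rule measurable_compose[OF borel_measurable_to_matrix
        borel_measurable_continuous_onI[OF continuous_on_resolvent_snr_gram_entry[OF assms]]])

lemma borel_measurable_diag_resolvent:
  fixes i :: "'t::finite"
  assumes "0 \<le> s"
  shows "(\<lambda>x::'r::finite \<times> 't \<Rightarrow> complex. diag_R (channel_gram x) i s) \<in> borel_measurable channel_dist"
    and "(\<lambda>x::'r \<times> 't \<Rightarrow> complex. diag_RAR (channel_gram x) i s) \<in> borel_measurable channel_dist"
    and "(\<lambda>x::'r \<times> 't \<Rightarrow> complex. diag_RARAR (channel_gram x) i s) \<in> borel_measurable channel_dist"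
proof -
  note [measurable] = borel_measurable_resolvent_channel_gram_entry[OF assms]
  show "(\<lambda>x::'r \<times> 't \<Rightarrow> complex. diag_R (channel_gram x) i s) \<in> borel_measurable channel_dist"
    unfolding diag_R_def by measurable
  show "(\<lambda>x::'r \<times> 't \<Rightarrow> complex. diag_RAR (channel_gram x) i s) \<in> borel_measurable channel_dist"
    unfolding diag_RAR_def matrix_matrix_mult_entry by measurable
  show "(\<lambda>x::'r \<times> 't \<Rightarrow> complex. diag_RARAR (channel_gram x) i s) \<in> borel_measurable channel_dist"
    unfolding diag_RARAR_def matrix_matrix_mult_entry by measurable
qed

lemma borel_measurable_stream_rate:
  fixes i :: "'t::finite"
  assumes "0 \<le> s"
  shows "(\<lambda>x::'r::finite \<times> 't \<Rightarrow> complex. stream_rate (channel_gram x) i s) \<in> borel_measurable channel_dist"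
    and "(\<lambda>x::'r \<times> 't \<Rightarrow> complex. stream_rate_d1 (channel_gram x) i s) \<in> borel_measurable channel_dist"
    and "(\<lambda>x::'r \<times> 't \<Rightarrow> complex. stream_rate_d2 (channel_gram x) i s) \<in> borel_measurable channel_dist"
proof -
  note [measurable] = borel_measurable_diag_resolvent[OF assms]
  show "(\<lambda>x::'r \<times> 't \<Rightarrow> complex. stream_rate (channel_gram x) i s) \<in> borel_measurable channel_dist"
    unfolding stream_rate_def by measurable
  show "(\<lambda>x::'r \<times> 't \<Rightarrow> complex. stream_rate_d1 (channel_gram x) i s) \<in> borel_measurable channel_dist"
    unfolding stream_rate_d1_def by measurable
  show "(\<lambda>x::'r \<times> 't \<Rightarrow> complex. stream_rate_d2 (channel_gram x) i s) \<in> borel_measurable channel_dist"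
    unfolding stream_rate_d2_def by measurable
qed

lemma log_one_plus_mmse_sinr:
  fixes x :: "'r::finite \<times> 't::finite \<Rightarrow> complex"
  assumes "0 \<le> s"
  shows "log 2 (1 + mmse_sinr s (to_matrix x :: complex^'t^'r) i) = stream_rate (channel_gram x) i s"
proof -
  have "(s / real CARD('t)) *\<^sub>R (adjoint_mat (to_matrix x :: complex^'t^'r) ** to_matrix x) = s *\<^sub>R channel_gram x"
    by (simp add: snr_gram_def)
  then have "mmse_sinr s (to_matrix x :: complex^'t^'r) i = 1 / diag_R (channel_gram x) i s - 1"
    unfolding mmse_sinr_def diag_R_def by simp
  then show ?thesis
    using diag_R_pos[OF pos_semidef_snr_gram assms] by (simp add: stream_rate_def log_def ln_div)
qed

lemma I_mmse_eq_sum_stream_rate: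
  assumes "0 \<le> s"
  shows "I_mmse TYPE('r::finite \<times> 't::finite) s
    = (\<Sum>i\<in>UNIV. integral\<^sup>L channel_dist (\<lambda>x::'r \<times> 't \<Rightarrow> complex. stream_rate (channel_gram x) i s))"
  unfolding I_mmse_def
  by (intro sum.cong refl Bochner_Integration.integral_cong) (simp add: log_one_plus_mmse_sinr[OF assms])

lemma Re_channel_gram_diag:
  fixes x :: "'r::finite \<times> 't::finite \<Rightarrow> complex"
  shows "Re (channel_gram x $ i $ i) = Re (gram x i i) / real CARD('t)"
  by (simp add: channel_gram_entry)

lemma Re_channel_gram_sq_diag:
  fixes x :: "'r::finite \<times> 't::finite \<Rightarrow> complex"
  shows "Re ((channel_gram x ** channel_gram x) $ i $ i) = (\<Sum>k\<in>UNIV. (cmod (gram x i k))\<^sup>2) / (real CARD('t))\<^sup>2"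
proof -
  have "(channel_gram x ** channel_gram x) $ i $ i
      = (\<Sum>k\<in>UNIV. complex_of_real (1 / real CARD('t))^2 * (gram x i k * cnj (gram x i k)))"
    by (simp add: matrix_matrix_mult_entry channel_gram_entry gram_swap[of x _ i] power2_eq_square mult_ac)
  also have "\<dots> = (\<Sum>k\<in>UNIV. complex_of_real ((cmod (gram x i k))\<^sup>2 / (real CARD('t))\<^sup>2))"
    by (intro sum.cong refl) (simp add: complex_norm_square[symmetric] power_divide)
  finally show ?thesis
    by (simp add: Re_sum sum_divide_distrib)
qed

lemma integral_stream_rate_d1_0:
  "integral\<^sup>L channel_dist (\<lambda>x::'r::finite \<times> 't::finite \<Rightarrow> complex. stream_rate_d1 (channel_gram x) i 0)
     = real CARD('r) / real CARD('t) / ln 2"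
  by (simp add: stream_rate_d1_0 Re_channel_gram_diag integral_gram_diag)

lemma integral_stream_rate_d2_0:
  "integral\<^sup>L channel_dist (\<lambda>x::'r::finite \<times> 't::finite \<Rightarrow> complex. stream_rate_d2 (channel_gram x) i 0)
     = - real CARD('r) * (real CARD('r) + 2 * real CARD('t) - 1) / ((real CARD('t))\<^sup>2 * ln 2)"
proof -
  have "integral\<^sup>L channel_dist (\<lambda>x::'r \<times> 't \<Rightarrow> complex. stream_rate_d2 (channel_gram x) i 0)
     = integral\<^sup>L channel_dist (\<lambda>x::'r \<times> 't \<Rightarrow> complex.
          ((Re (gram x i i))\<^sup>2 - 2 * (\<Sum>k\<in>UNIV. (cmod (gram x i k))\<^sup>2)) / ((real CARD('t))\<^sup>2 * ln 2))"
    by (intro Bochner_Integration.integral_cong refl)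
       (simp add: stream_rate_d2_0 Re_channel_gram_diag Re_channel_gram_sq_diag power_divide diff_divide_distrib)
  also have "\<dots> = (integral\<^sup>L channel_dist (\<lambda>x::'r \<times> 't \<Rightarrow> complex. (Re (gram x i i))\<^sup>2)
       - 2 * integral\<^sup>L channel_dist (\<lambda>x::'r \<times> 't \<Rightarrow> complex. \<Sum>k\<in>UNIV. (cmod (gram x i k))\<^sup>2))
       / ((real CARD('t))\<^sup>2 * ln 2)"
    by (simp add: Bochner_Integration.integral_diff[OF integral_gram_diag_sq(1)
          integrable_mult_right[OF integral_gram_row_norm_sq(1)]])
  also have "\<dots> = - real CARD('r) * (real CARD('r) + 2 * real CARD('t) - 1) / ((real CARD('t))\<^sup>2 * ln 2)"
    by (simp add: integral_gram_diag_sq(2) integral_gram_row_norm_sq(2) algebra_simps)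
  finally show ?thesis .
qed

definition rate_dominant :: "('r::finite \<times> 't::finite \<Rightarrow> complex) \<Rightarrow> real" where
  "rate_dominant x = 48 * real CARD('t)^12 * energy x ^ 6 / ln 2"

lemma rate_dominant_nonneg: "0 \<le> rate_dominant x"
  by (simp add: rate_dominant_def)

lemma integrable_rate_dominant: "integrable channel_dist rate_dominant"
  unfolding rate_dominant_def[abs_def]
  by (intro Bochner_Integration.integrable_divide Bochner_Integration.integrable_mult_right integrable_energy_power)

lemma abs_stream_rate_derivs_le_rate_dominant:
  fixes x :: "'r::finite \<times> 't::finite \<Rightarrow> complex"
  assumes "0 \<le> s" "s \<le> 1"
  shows "\<bar>stream_rate_d1 (channel_gram x) i s\<bar> \<le> rate_dominant x"
    and "\<bar>stream_rate_d2 (channel_gram x) i s\<bar> \<le> rate_dominant x"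
  unfolding rate_dominant_def
  by (intro abs_stream_rate_d1_le abs_stream_rate_d2_le pos_semidef_snr_gram assms
        norm_channel_gram_le_energy energy_ge_1)+

lemma has_real_derivative_stream_rate_Ico:
  fixes x :: "'r::finite \<times> 't::finite \<Rightarrow> complex"
  assumes "s \<in> {0..<1}"
  shows "(stream_rate (channel_gram x) i has_real_derivative stream_rate_d1 (channel_gram x) i s) (at s within {0..<1})"
    and "(stream_rate_d1 (channel_gram x) i has_real_derivative stream_rate_d2 (channel_gram x) i s) (at s within {0..<1})"
  using assms
  by (auto intro!: has_field_derivative_subset[OF has_real_derivative_stream_rate]
      has_field_derivative_subset[OF has_real_derivative_stream_rate_d1] pos_semidef_snr_gram)

lemma integrable_stream_rate:
  assumes "s \<in> {0..<1}"
  shows "integrable channel_dist (\<lambda>x::'r::finite \<times> 't::finite \<Rightarrow> complex. stream_rate (channel_gram x) i s)"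
    and "integrable channel_dist (\<lambda>x::'r::finite \<times> 't::finite \<Rightarrow> complex. stream_rate_d1 (channel_gram x) i s)"
proof -
  show "integrable channel_dist (\<lambda>x::'r \<times> 't \<Rightarrow> complex. stream_rate_d1 (channel_gram x) i s)"
    using assms abs_stream_rate_derivs_le_rate_dominant(1)[of s] borel_measurable_stream_rate(2)[of s]
    by (intro Bochner_Integration.integrable_bound[OF integrable_rate_dominant]) (auto intro!: AE_I2 simp: rate_dominant_nonneg)
  have "\<bar>stream_rate (channel_gram x) i s\<bar> \<le> rate_dominant x" for x :: "'r \<times> 't \<Rightarrow> complex"
  proof -
    have "norm (stream_rate (channel_gram x) i s - stream_rate (channel_gram x) i 0) \<le> rate_dominant x * norm (s - 0)"
      using assms abs_stream_rate_derivs_le_rate_dominant(1)[of _ x i]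
      by (intro field_differentiable_bound[OF _ has_real_derivative_stream_rate_Ico(1)]) auto
    moreover have "rate_dominant x * s \<le> rate_dominant x"
      using assms by (intro mult_left_le) (auto simp: rate_dominant_def)
    ultimately show ?thesis
      using assms by (simp add: stream_rate_0)
  qed
  then show "integrable channel_dist (\<lambda>x::'r \<times> 't \<Rightarrow> complex. stream_rate (channel_gram x) i s)"
    using assms borel_measurable_stream_rate(1)[of s]
    by (intro Bochner_Integration.integrable_bound[OF integrable_rate_dominant]) (auto intro!: AE_I2 simp: rate_dominant_nonneg)
qed

lemma has_real_derivative_integral_stream_rate:
  fixes i :: "'t::finite"
  assumes "s \<in> {0..<1}"
  shows "((\<lambda>t. integral\<^sup>L channel_dist (\<lambda>x::'r::finite \<times> 't \<Rightarrow> complex. stream_rate (channel_gram x) i t))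
      has_real_derivative integral\<^sup>L channel_dist (\<lambda>x::'r \<times> 't \<Rightarrow> complex. stream_rate_d1 (channel_gram x) i s))
      (at s within {0..<1})"
  by (rule has_real_derivative_integral[where w=rate_dominant])
     (use assms in \<open>auto intro: abs_stream_rate_derivs_le_rate_dominant(1) integrable_rate_dominant
       has_real_derivative_stream_rate_Ico integrable_stream_rate borel_measurable_stream_rate\<close>)

lemma has_real_derivative_integral_stream_rate_d1:
  fixes i :: "'t::finite"
  assumes "s \<in> {0..<1}"
  shows "((\<lambda>t. integral\<^sup>L channel_dist (\<lambda>x::'r::finite \<times> 't \<Rightarrow> complex. stream_rate_d1 (channel_gram x) i t))
      has_real_derivative integral\<^sup>L channel_dist (\<lambda>x::'r \<times> 't \<Rightarrow> complex. stream_rate_d2 (channel_gram x) i s))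
      (at s within {0..<1})"
  by (rule has_real_derivative_integral[where w=rate_dominant])
     (use assms in \<open>auto intro: abs_stream_rate_derivs_le_rate_dominant(2) integrable_rate_dominant
       has_real_derivative_stream_rate_Ico integrable_stream_rate borel_measurable_stream_rate\<close>)

lemma at_within_Ico_eq_atLeast: "s < 1 \<Longrightarrow> at s within {0..<1} = at s within ({0..}::real set)"
  by (rule at_within_nhd[where S="{..<1}"]) auto

lemma has_real_derivative_I_mmse:
  assumes "s \<in> {0..<1}"
  shows "(I_mmse TYPE('r::finite \<times> 't::finite) has_real_derivative
      (\<Sum>i\<in>UNIV. integral\<^sup>L channel_dist (\<lambda>x::'r \<times> 't \<Rightarrow> complex. stream_rate_d1 (channel_gram x) i s)))
      (at s within {0..})"
proof -
  have "(I_mmse TYPE('r \<times> 't) has_real_derivative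
      (\<Sum>i\<in>UNIV. integral\<^sup>L channel_dist (\<lambda>x::'r \<times> 't \<Rightarrow> complex. stream_rate_d1 (channel_gram x) i s)))
      (at s within {0..<1})"
  proof (rule has_field_derivative_transform_within[OF DERIV_sum zero_less_one assms])
    show "((\<lambda>t. integral\<^sup>L channel_dist (\<lambda>x::'r \<times> 't \<Rightarrow> complex. stream_rate (channel_gram x) i t))
        has_real_derivative integral\<^sup>L channel_dist (\<lambda>x::'r \<times> 't \<Rightarrow> complex. stream_rate_d1 (channel_gram x) i s))
        (at s within {0..<1})" for i :: 't
      by (rule has_real_derivative_integral_stream_rate[OF assms])
    show "(\<Sum>i\<in>UNIV. integral\<^sup>L channel_dist (\<lambda>x::'r \<times> 't \<Rightarrow> complex. stream_rate (channel_gram x) i t))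
        = I_mmse TYPE('r \<times> 't) t" if "t \<in> {0..<1}" for t
      using I_mmse_eq_sum_stream_rate[of t, where 'r='r and 't='t] that by simp
  qed
  then show ?thesis
    using assms at_within_Ico_eq_atLeast[of s] by simp
qed

theorem proposition3:
  "\<exists>D1 D2 I' \<epsilon>. \<epsilon> > 0 \<and>
     (\<forall>s\<in>{0..<\<epsilon>}. (I_mmse TYPE('r::finite \<times> 't::finite) has_real_derivative I' s) (at s within {0..})) \<and>
     I' 0 = D1 \<and>
     (I' has_real_derivative D2) (at 0 within {0..}) \<and>
     D2 \<noteq> 0 \<and>
     - 2 * D1\<^sup>2 * ln 2 / D2 =
       2 * real CARD('r) * real CARD('t) / (2 * real CARD('t) + real CARD('r) - 1)"
proof -
  define I' where "I' t = (\<Sum>i\<in>UNIV.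
    integral\<^sup>L channel_dist (\<lambda>x::'r \<times> 't \<Rightarrow> complex. stream_rate_d1 (channel_gram x) i t))" for t
  define D2 where "D2 = (\<Sum>i\<in>UNIV.
    integral\<^sup>L channel_dist (\<lambda>x::'r \<times> 't \<Rightarrow> complex. stream_rate_d2 (channel_gram x) i 0))"
  define N T where "N = real CARD('r)" and "T = real CARD('t)"
  have "N \<ge> 1" "T \<ge> 1"
    by (simp_all add: N_def T_def)
  have "(I' has_real_derivative D2) (at 0 within {0..<1})"
    unfolding I'_def[abs_def] D2_def by (intro DERIV_sum has_real_derivative_integral_stream_rate_d1) simp
  then have "(I' has_real_derivative D2) (at 0 within {0..})"
    using at_within_Ico_eq_atLeast[of 0] by simp
  moreover have "\<forall>s\<in>{0..<1}. (I_mmse TYPE('r \<times> 't) has_real_derivative I' s) (at s within {0..})"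
    unfolding I'_def using has_real_derivative_I_mmse by blast
  moreover have "I' 0 = N / ln 2" and D2: "D2 = - N * (N + 2 * T - 1) / (T * ln 2)"
    unfolding I'_def D2_def N_def T_def
    by (simp_all add: integral_stream_rate_d1_0 integral_stream_rate_d2_0 power2_eq_square)
  moreover have "D2 \<noteq> 0"
    unfolding D2 using \<open>N \<ge> 1\<close> \<open>T \<ge> 1\<close> by simp
  moreover have "- 2 * (N / ln 2)\<^sup>2 * ln 2 / D2 = 2 * N * T / (2 * T + N - 1)"
    unfolding D2 using \<open>N \<ge> 1\<close> \<open>T \<ge> 1\<close> by (simp add: power2_eq_square divide_simps)
  ultimately show ?thesis
    unfolding N_def T_def by (intro exI[of _ "I' 0"] exI[of _ D2] exI[of _ I'] exI[of _ 1]) simp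
qed

end
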